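(* Let $1<p<q<\infty$. Let $(\mathcal{A},\xi_0)$ be a tree rooted at $\xi_0$ with finite or countable vertex set, and let $u,w:\mathbf{V}(\mathcal{A})\to[0,\infty)$ satisfy $u(\xi)=u_j$, $w(\xi)=w_j$ for all $\xi\in\mathbf{V}_j^{\mathcal{A}}(\xi_0)$, $j\in\mathbb{Z}_+$, for some nonnegative numbers $u_j,w_j$. Suppose there exist a number $C_*\ge1$, numbers $R_0\ge R>1$, and a function $S:\mathbb{Z}_+\to(0,\infty)$ such that (i) $C_*^{-1}\frac{S(j')}{S(j)}\le \operatorname{card}\mathbf{V}^{\mathcal{A}}_{j'-j}(\xi)\le C_*\frac{S(j')}{S(j)}$ for all $j\in\mathbb{Z}_+$, all $\xi\in\mathbf{V}^{\mathcal{A}}_j(\xi_0)$ and all $j'\ge j$; (ii) $S(0)=1$; (iii) $R_0\ge \frac{S(j+1)}{S(j)}\ge R$ for all $j\in\mathbb{Z}_+$. Let $\hat{\mathfrak{S}}^{p,q}_{\mathcal{A},u,w}\in[0,\infty]$ be the operator norm of $S_{u,w,\mathcal{A}}f(\xi)=w(\xi)\sum_{\xi'\le\xi}u(\xi')f(\xi')$ from $l_q(l_p(\mathcal{A}))$ to $l_q(\mathcal{A})$. Then $$\hat{\mathfrak{S}}^{p,q}_{\mathcal{A},u,w}\asymp \sup_{j\in\mathbb{Z}_+}u_j\Big(\sum_{i\ge j}w_i^q\frac{S(i)}{S(j)}\Big)^{1/q}\asymp\sup_{\xi\in\mathbf{V}(\mathcal{A})}u(\xi)\|w\|_{l_q(\mathcal{A}_\xi)},$$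 where $A\asymp B$ means there are constants $c_1,c_2>0$ depending only on $p,q,C_*,R,R_0$ with $c_1B\le A\le c_2B$ (both sides possibly infinite).
   Context: Graphs have no loops or multiple edges. Partial order on $\mathbf{V}(\mathcal{A})$: $\xi'>\xi$ if there is a simple path $(\xi_0,\xi_1,\dots,\xi_n,\xi')$ with $\xi=\xi_k$ for some $k\in\{0,\dots,n\}$, and then the distance is $\rho(\xi,\xi')=n+1-k$; $\rho(\xi,\xi)=0$; $\xi'\ge\xi$ means $\xi'>\xi$ or $\xi'=\xi$. For $j\in\mathbb{Z}_+$ and $\xi\in\mathbf{V}(\mathcal{A})$, $\mathbf{V}^{\mathcal{A}}_j(\xi)=\{\xi'\ge\xi:\rho(\xi,\xi')=j\}$. $\mathcal{A}_\xi$ is the subtree with vertex set $\{\xi'\ge\xi\}$. $\|g\|_{l_q(\mathcal{G})}=\big(\sum_{\xi\in\mathbf{V}(\mathcal{G})}|g(\xi)|^q\big)^{1/q}$, and $l_q(\mathcal{A})$ is the space of $g:\mathbf{V}(\mathcal{A})\to\mathbb{R}$ with finite norm. The mixed norm is $\|f\|_{l_q(l_p(\mathcal{A}))}=\Big(\sum_{j=0}^\infty\Big(\sum_{\xi\in\mathbf{V}_j^{\mathcal{A}}(\xi_0)}|f(\xi)|^p\Big)^{q/p}\Big)^{1/q}$, and $l_q(l_p(\mathcal{A}))$ is the space of functions with finite such norm; the operator norm is the minimal $C$ with $\|S_{u,w,\mathcal{A}}f\|_{l_q(\mathcal{A})}\le C\|f\|_{l_q(l_p(\mathcal{A}))}$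 for all $f$. *)

theory Defs
  imports "HOL-Analysis.Analysis"
begin

text \<open>A rooted tree with vertex set V (a subset of nat, i.e. finite or countable),
root r, encoded by its parent map: every vertex reaches the root by iterating parent,
and the root is its own parent (convention).\<close>

definition rooted_tree :: "nat set \<Rightarrow> (nat \<Rightarrow> nat) \<Rightarrow> nat \<Rightarrow> bool" where
  "rooted_tree V par r \<longleftrightarrow> r \<in> V \<and> par r = r \<and>
     (\<forall>v\<in>V. v \<noteq> r \<longrightarrow> par v \<in> V) \<and> (\<forall>v\<in>V. \<exists>n. (par ^^ n) v = r)"

definition depth :: "(nat \<Rightarrow> nat) \<Rightarrow> nat \<Rightarrow> nat \<Rightarrow> nat" where
  "depth par r v = (LEAST n. (par ^^ n) v = r)"

definition desc :: "nat set \<Rightarrow> (nat \<Rightarrow> nat) \<Rightarrow> nat \<Rightarrow> nat \<Rightarrow> nat \<Rightarrow> nat set" where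
  "desc V par r \<xi> j = {\<xi>'\<in>V. depth par r \<xi>' = depth par r \<xi> + j \<and> (par ^^ j) \<xi>' = \<xi>}"

definition subtree :: "nat set \<Rightarrow> (nat \<Rightarrow> nat) \<Rightarrow> nat \<Rightarrow> nat \<Rightarrow> nat set" where
  "subtree V par r \<xi> = (\<Union>j. desc V par r \<xi> j)"

definition ancestors :: "(nat \<Rightarrow> nat) \<Rightarrow> nat \<Rightarrow> nat \<Rightarrow> nat set" where
  "ancestors par r \<xi> = {(par ^^ k) \<xi> | k. k \<le> depth par r \<xi>}"

definition hardy_op :: "(nat \<Rightarrow> nat) \<Rightarrow> nat \<Rightarrow> (nat \<Rightarrow> real) \<Rightarrow> (nat \<Rightarrow> real)
    \<Rightarrow> (nat \<Rightarrow> real) \<Rightarrow> nat \<Rightarrow> real" where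
  "hardy_op par r u w f \<xi> = w \<xi> * (\<Sum>\<xi>'\<in>ancestors par r \<xi>. u \<xi>' * f \<xi>')"

definition enn_powr :: "ennreal \<Rightarrow> real \<Rightarrow> ennreal" where
  "enn_powr x a = (if x = top then top else ennreal (enn2real x powr a))"

definition lq_norm :: "nat set \<Rightarrow> real \<Rightarrow> (nat \<Rightarrow> real) \<Rightarrow> ennreal" where
  "lq_norm G q g = enn_powr (\<Sum>\<^sub>\<infinity>\<xi>\<in>G. ennreal (\<bar>g \<xi>\<bar> powr q)) (1 / q)"

definition mixed_norm :: "nat set \<Rightarrow> (nat \<Rightarrow> nat) \<Rightarrow> nat \<Rightarrow> real \<Rightarrow> real \<Rightarrow> (nat \<Rightarrow> real) \<Rightarrow> ennreal" where
  "mixed_norm V par r p q f =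
     enn_powr (\<Sum>\<^sub>\<infinity>j\<in>(UNIV::nat set).
        enn_powr (\<Sum>\<^sub>\<infinity>\<xi>\<in>desc V par r r j. ennreal (\<bar>f \<xi>\<bar> powr p)) (q / p)) (1 / q)"

definition op_norm :: "nat set \<Rightarrow> (nat \<Rightarrow> nat) \<Rightarrow> nat \<Rightarrow> real \<Rightarrow> real \<Rightarrow> (nat \<Rightarrow> real)
    \<Rightarrow> (nat \<Rightarrow> real) \<Rightarrow> ennreal" where
  "op_norm V par r p q u w = Inf {C. \<forall>f. mixed_norm V par r p q f < top \<longrightarrow>
       lq_norm V q (hardy_op par r u w f) \<le> C * mixed_norm V par r p q f}"

end

theory Submission
  imports Defs
begin

text \<open>
  Lower bounds: applied to the indicator of a vertex \<open>\<xi>\<close>, the operator equals \<open>u(\<xi>) w\<close> on the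
  subtree \<open>A\<^sub>\<xi>\<close>, so \<open>u(\<xi>) \<parallel>w\<parallel>\<close> (norm on \<open>A\<^sub>\<xi>\<close>) is at most the operator norm. Since \<open>\<xi>\<close> has at
  least \<open>S(i) / (C\<^sub>* S(j))\<close> descendants at depth \<open>i\<close>, the level-wise supremum is at most \<open>C\<^sub>*\<close>
  times the subtree supremum.

  Upper bound, with \<open>b\<close> the level-wise supremum and \<open>f \<ge> 0\<close>: along a branch the \<open>q\<close>-th power of
  the Hardy sum \<open>P(\<eta>) = \<Sum>\<^bsub>\<xi> \<le> \<eta>\<^esub> u(\<xi>) f(\<xi>)\<close> telescopes into the increments
  \<open>D(\<xi>) = P(\<xi>)^q - (P(\<xi>) - u(\<xi>) f(\<xi>))^q\<close> at the ancestors of \<open>\<eta>\<close>. Regrouping by the level \<open>k\<close>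
  of the ancestor, each vertex of level \<open>k\<close> having at most \<open>C\<^sub>* S(i) / S(k)\<close> descendants at
  depth \<open>i\<close>, bounds \<open>\<parallel>S f\<parallel>^q\<close> by \<open>C\<^sub>* \<Sum>\<^sub>k \<Sum>\<^bsub>\<xi> \<in> V\<^sub>k\<^esub> D(\<xi>) T\<^sub>k / S(k)\<close> with the weight tail
  \<open>T\<^sub>k = \<Sum>\<^bsub>i \<ge> k\<^esub> w\<^sub>i^q S(i)\<close>. The mean value theorem and the bound \<open>b\<close> give
  \<open>D(\<xi>) T\<^sub>k / S(k) \<le> q b^q f(\<xi>) K(\<xi>)^(q-1)\<close>, where \<open>K(\<xi>) = \<Sum>\<^sub>j (S(j) / S(k))^(1/q) f(\<xi>\<^sub>j)\<close>
  runs over the ancestors \<open>\<xi>\<^sub>j\<close> of \<open>\<xi>\<close> with geometrically decaying weights, as \<open>S\<close> grows at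
  least like \<open>R^j\<close>. Hoelder's inequality on each level (exponents \<open>p, p'\<close>), Young's inequality
  (exponents \<open>q, q'\<close>) and a power-mean estimate of \<open>K\<close> reduce everything to geometric
  convolutions of the level sums \<open>(\<Sum>\<^bsub>\<xi> \<in> V\<^sub>k\<^esub> f(\<xi>)^p)^(q/p)\<close>. The hypothesis \<open>p < q\<close> is what
  makes \<open>(q - 1) p'\<close> exceed \<open>q\<close>, which leaves room for a positive decay rate.
\<close>

section \<open>Elementary inequalities\<close>

lemma Holder_inequality_sum:
  fixes a b :: "'i \<Rightarrow> real"
  assumes fin: "finite I" and a: "\<And>i. i \<in> I \<Longrightarrow> a i \<ge> 0" and b: "\<And>i. i \<in> I \<Longrightarrow> b i \<ge> 0"
    and P: "P > 1" and Q: "Q > 1" and PQ: "1/P + 1/Q = 1"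
  shows "(\<Sum>i\<in>I. a i * b i) \<le> (\<Sum>i\<in>I. a i powr P) powr (1/P) * (\<Sum>i\<in>I. b i powr Q) powr (1/Q)"
proof -
  define A where "A = (\<Sum>i\<in>I. a i powr P)"
  define B where "B = (\<Sum>i\<in>I. b i powr Q)"
  have A0: "A \<ge> 0" "B \<ge> 0" unfolding A_def B_def by (auto intro: sum_nonneg)
  show ?thesis
  proof (cases "A = 0 \<or> B = 0")
    case True
    then have "\<forall>i\<in>I. a i * b i = 0"
      using fin a b unfolding A_def B_def by (auto simp: sum_nonneg_eq_0_iff)
    then have "(\<Sum>i\<in>I. a i * b i) = 0" by (intro sum.neutral) auto
    then show ?thesis by simp
  next
    case False
    then have Ap: "A > 0" "B > 0" using A0 by auto
    define \<alpha> where "\<alpha> = A powr (1/P)"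
    define \<beta> where "\<beta> = B powr (1/Q)"
    have ab: "\<alpha> > 0" "\<beta> > 0" using Ap unfolding \<alpha>_def \<beta>_def by auto
    have aP: "\<alpha> powr P = A" unfolding \<alpha>_def using Ap P by (simp add: powr_powr)
    have bQ: "\<beta> powr Q = B" unfolding \<beta>_def using Ap Q by (simp add: powr_powr)
    have "(a i / \<alpha>) * (b i / \<beta>) \<le> a i powr P / (A * P) + b i powr Q / (B * Q)" if i: "i \<in> I" for i
    proof -
      have "(a i / \<alpha>) * (b i / \<beta>) \<le> (a i / \<alpha>) powr P / P + (b i / \<beta>) powr Q / Q"
        by (rule Youngs_inequality) (use P Q PQ a b i ab in auto)
      also have "\<dots> = a i powr P / (A * P) + b i powr Q / (B * Q)"
        by (simp add: powr_divide aP bQ)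
      finally show ?thesis .
    qed
    then have "(\<Sum>i\<in>I. (a i / \<alpha>) * (b i / \<beta>)) \<le> (\<Sum>i\<in>I. a i powr P / (A * P) + b i powr Q / (B * Q))"
      by (rule sum_mono)
    also have "\<dots> = A / (A * P) + B / (B * Q)"
      unfolding sum.distrib A_def B_def by (simp add: sum_divide_distrib)
    also have "\<dots> = 1" using Ap P Q PQ by simp
    finally have "(\<Sum>i\<in>I. a i * b i) / (\<alpha> * \<beta>) \<le> 1"
      by (simp add: sum_divide_distrib)
    then show ?thesis using ab unfolding \<alpha>_def \<beta>_def A_def B_def
      by (simp add: divide_le_eq)
  qed
qed

lemma powr_weighted_sum_le:
  fixes \<alpha> y :: "'i \<Rightarrow> real"
  assumes fin: "finite I" and a: "\<And>i. i \<in> I \<Longrightarrow> \<alpha> i \<ge> 0" and y: "\<And>i. i \<in> I \<Longrightarrow> y i \<ge> 0"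
    and r: "r > 1"
  shows "(\<Sum>i\<in>I. \<alpha> i * y i) powr r \<le> (\<Sum>i\<in>I. \<alpha> i) powr (r - 1) * (\<Sum>i\<in>I. \<alpha> i * y i powr r)"
proof -
  define r' where "r' = r / (r - 1)"
  have r': "r' > 1" "1/r' + 1/r = 1" using r unfolding r'_def by (auto simp: field_simps)
  have split: "\<alpha> i * y i = \<alpha> i powr (1/r') * (\<alpha> i powr (1/r) * y i)" if i: "i \<in> I" for i
  proof -
    have "\<alpha> i powr (1/r') * \<alpha> i powr (1/r) = \<alpha> i powr (1/r' + 1/r)" by (simp add: powr_add)
    also have "\<dots> = \<alpha> i" using r' a[OF i] by simp
    finally show ?thesis by (simp add: mult.assoc)
  qed
  have "(\<Sum>i\<in>I. \<alpha> i * y i) = (\<Sum>i\<in>I. \<alpha> i powr (1/r') * (\<alpha> i powr (1/r) * y i))"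
    using split by (rule sum.cong[OF refl])
  also have "\<dots> \<le> (\<Sum>i\<in>I. (\<alpha> i powr (1/r')) powr r') powr (1/r')
                  * (\<Sum>i\<in>I. (\<alpha> i powr (1/r) * y i) powr r) powr (1/r)"
    by (rule Holder_inequality_sum) (use fin y r r' in auto)
  also have "\<dots> = (\<Sum>i\<in>I. \<alpha> i) powr (1/r') * (\<Sum>i\<in>I. \<alpha> i * y i powr r) powr (1/r)"
    using r r' a by (simp add: powr_mult powr_powr)
  finally have le: "(\<Sum>i\<in>I. \<alpha> i * y i) \<le> (\<Sum>i\<in>I. \<alpha> i) powr (1/r') * (\<Sum>i\<in>I. \<alpha> i * y i powr r) powr (1/r)" .
  have nn: "0 \<le> (\<Sum>i\<in>I. \<alpha> i * y i)" "0 \<le> (\<Sum>i\<in>I. \<alpha> i)" "0 \<le> (\<Sum>i\<in>I. \<alpha> i * y i powr r)"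
    using a y by (auto intro: sum_nonneg)
  have "(\<Sum>i\<in>I. \<alpha> i * y i) powr r
      \<le> ((\<Sum>i\<in>I. \<alpha> i) powr (1/r') * (\<Sum>i\<in>I. \<alpha> i * y i powr r) powr (1/r)) powr r"
    by (rule powr_mono2) (use r nn le in auto)
  also have "\<dots> = (\<Sum>i\<in>I. \<alpha> i) powr (r - 1) * (\<Sum>i\<in>I. \<alpha> i * y i powr r)"
  proof -
    have "1 / r' * r = r - 1" using r unfolding r'_def by (simp add: field_simps)
    then show ?thesis using r nn by (simp add: powr_mult powr_powr)
  qed
  finally show ?thesis .
qed

lemma powr_add_le_add_powr:
  fixes x y s :: real
  assumes "x \<ge> 0" "y \<ge> 0" "0 < s" "s \<le> 1"
  shows "(x + y) powr s \<le> x powr s + y powr s"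
proof (cases "x + y = 0")
  case True then show ?thesis using assms by simp
next
  case False
  then have t: "x + y > 0" using assms by simp
  have "t \<le> t powr s" if "0 \<le> t" "t \<le> 1" for t :: real
    using powr_mono'[of s 1 t] that assms by simp
  then have "x / (x+y) \<le> (x/(x+y)) powr s" "y / (x+y) \<le> (y/(x+y)) powr s"
    using assms t by auto
  moreover have "x/(x+y) + y/(x+y) = 1" using t by (simp add: add_divide_distrib[symmetric])
  ultimately have "1 \<le> (x/(x+y)) powr s + (y/(x+y)) powr s"
    by linarith
  also have "\<dots> = (x powr s + y powr s) / (x+y) powr s"
    by (simp add: powr_divide add_divide_distrib)
  finally show ?thesis using t by (simp add: le_divide_eq)
qed

lemma powr_sum_le_sum_powr:
  fixes x :: "'i \<Rightarrow> real"
  assumes "finite I" "\<And>i. i \<in> I \<Longrightarrow> x i \<ge> 0" "0 < s" "s \<le> 1"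
  shows "(\<Sum>i\<in>I. x i) powr s \<le> (\<Sum>i\<in>I. x i powr s)"
  using assms
proof (induction I rule: finite_induct)
  case empty then show ?case by simp
next
  case (insert a F)
  have "(\<Sum>i\<in>insert a F. x i) powr s = (x a + (\<Sum>i\<in>F. x i)) powr s"
    using insert by simp
  also have "\<dots> \<le> x a powr s + (\<Sum>i\<in>F. x i) powr s"
    by (rule powr_add_le_add_powr) (use insert in \<open>auto intro: sum_nonneg\<close>)
  also have "\<dots> \<le> x a powr s + (\<Sum>i\<in>F. x i powr s)"
    using insert by auto
  finally show ?case using insert by simp
qed

lemma powr_diff_le:
  fixes x y q :: real
  assumes "0 \<le> y" "y \<le> x" "q \<ge> 1"
  shows "x powr q - y powr q \<le> q * x powr (q - 1) * (x - y)"
proof (cases "y = x \<or> y = 0")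
  case True
  have "x powr q = x powr (q-1) * x" using assms powr_add[of x "q-1" 1] by simp
  also have "\<dots> \<le> q * (x powr (q-1) * x)"
    using assms mult_right_mono[of 1 q "x powr (q-1) * x"] by simp
  finally show ?thesis using True by (auto simp: mult.assoc)
next
  case False
  then have yx: "0 < y" "y < x" using assms by auto
  have "\<exists>z>y. z < x \<and> x powr q - y powr q = (x - y) * (q * z powr (q - 1))"
    using yx by (intro MVT2) (auto intro!: has_real_derivative_powr)
  then obtain z where z: "y < z" "z < x" "x powr q - y powr q = (x - y) * (q * z powr (q - 1))"
    by blast
  have "z powr (q-1) \<le> x powr (q-1)" using z yx assms by (intro powr_mono2) auto
  then have "(x - y) * (q * z powr (q - 1)) \<le> (x - y) * (q * x powr (q - 1))"
    using yx assms by (intro mult_left_mono) auto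
  then show ?thesis using z by (simp add: algebra_simps)
qed

lemma realpow_powr: "0 \<le> (x::real) \<Longrightarrow> (x ^ n) powr a = (x powr a) ^ n"
  by (induction n) (auto simp: powr_mult)

lemma sum_atMost_triangle_swap:
  "(\<Sum>k\<le>(N::nat). \<Sum>j\<le>k. g k j) = (\<Sum>j\<le>N. \<Sum>k\<in>{j..N}. g k j)"
proof -
  have "(\<Sum>k\<le>N. \<Sum>j\<le>k. g k j) = (\<Sum>k\<in>{..N}. \<Sum>j\<in>{y. y \<in> {..N} \<and> y \<le> k}. g k j)"
    by (intro sum.cong) auto
  also have "\<dots> = (\<Sum>j\<in>{..N}. \<Sum>k\<in>{x. x \<in> {..N} \<and> j \<le> x}. g k j)"
    by (rule sum.swap_restrict) auto
  also have "\<dots> = (\<Sum>j\<le>N. \<Sum>k\<in>{j..N}. g k j)"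
    by (intro sum.cong) auto
  finally show ?thesis .
qed

lemma sum_power_diff_le:
  fixes \<beta> :: real
  assumes "0 \<le> \<beta>" "\<beta> < 1"
  shows "(\<Sum>j\<le>k. \<beta> ^ (k - j)) \<le> 1 / (1 - \<beta>)"
proof -
  have "(\<Sum>j\<le>k. \<beta> ^ (k - j)) = (\<Sum>m\<le>k. \<beta> ^ m)"
    by (rule sum.reindex_bij_witness[where i="\<lambda>m. k - m" and j="\<lambda>j. k - j"]) auto
  moreover have "(1 - \<beta>) * (\<Sum>m\<le>k. \<beta> ^ m) = 1 - \<beta> ^ Suc k" by (rule sum_gp_basic)
  moreover have "\<beta> ^ Suc k \<ge> 0" using assms by simp
  ultimately have "(1 - \<beta>) * (\<Sum>j\<le>k. \<beta> ^ (k - j)) \<le> 1" by simp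
  then show ?thesis using assms by (simp add: le_divide_eq mult.commute)
qed

lemma sum_geometric_convolution_le:
  fixes \<beta> :: real and h :: "nat \<Rightarrow> real"
  assumes "0 \<le> \<beta>" "\<beta> < 1" "\<And>j. h j \<ge> 0"
  shows "(\<Sum>k\<le>N. \<Sum>j\<le>k. \<beta> ^ (k - j) * h j) \<le> 1 / (1 - \<beta>) * (\<Sum>j\<le>N. h j)"
proof -
  have "(\<Sum>k\<le>N. \<Sum>j\<le>k. \<beta> ^ (k - j) * h j) = (\<Sum>j\<le>N. (\<Sum>k\<in>{j..N}. \<beta> ^ (k - j)) * h j)"
    by (simp add: sum_atMost_triangle_swap sum_distrib_right)
  also have "\<dots> \<le> (\<Sum>j\<le>N. 1 / (1 - \<beta>) * h j)"
  proof (rule sum_mono)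
    fix j assume j: "j \<in> {..N}"
    have "(\<Sum>k\<in>{j..N}. \<beta> ^ (k - j)) = (\<Sum>m\<le>N - j. \<beta> ^ (N - j - m))"
      by (rule sum.reindex_bij_witness[where i="\<lambda>m. N - m" and j="\<lambda>k. N - k"]) (use j in auto)
    also have "\<dots> \<le> 1 / (1 - \<beta>)" by (rule sum_power_diff_le) (use assms in auto)
    finally show "(\<Sum>k\<in>{j..N}. \<beta> ^ (k - j)) * h j \<le> 1 / (1 - \<beta>) * h j"
      using assms by (intro mult_right_mono) auto
  qed
  also have "\<dots> = 1 / (1 - \<beta>) * (\<Sum>j\<le>N. h j)" by (simp add: sum_distrib_left)
  finally show ?thesis .
qed

section \<open>Sums and powers in extended nonnegative reals\<close>

lemma infsum_ennreal_eq_SUP: "infsum (f :: _ \<Rightarrow> ennreal) A = (SUP F\<in>{F. finite F \<and> F \<subseteq> A}. sum f F)"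
  by (rule nonneg_infsum_complete) simp

lemma sum_le_infsum_ennreal: "finite F \<Longrightarrow> F \<subseteq> A \<Longrightarrow> sum (f :: _ \<Rightarrow> ennreal) F \<le> infsum f A"
  unfolding infsum_ennreal_eq_SUP by (rule SUP_upper) auto

lemma infsum_cmult_ennreal: "infsum (\<lambda>x. c * (f x :: ennreal)) A = c * infsum f A"
  unfolding infsum_ennreal_eq_SUP SUP_mult_left_ennreal by (simp add: sum_distrib_left)

lemma infsum_mono_set_ennreal: "A \<subseteq> B \<Longrightarrow> infsum (f :: _ \<Rightarrow> ennreal) A \<le> infsum f B"
  unfolding infsum_ennreal_eq_SUP by (rule SUP_subset_mono) auto

lemma enn_powr_ennreal: "0 \<le> x \<Longrightarrow> enn_powr (ennreal x) a = ennreal (x powr a)"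
  unfolding enn_powr_def by simp

lemma enn_powr_top [simp]: "enn_powr top a = top"
  unfolding enn_powr_def by simp

lemma enn_powr_mono:
  assumes "x \<le> y" "a > 0"
  shows "enn_powr x a \<le> enn_powr y a"
proof (cases "y = top")
  case False
  then obtain x' y' where xy: "x = ennreal x'" "y = ennreal y'" "0 \<le> x'" "0 \<le> y'"
    using assms top_unique by (metis ennreal_cases)
  then show ?thesis using assms by (simp add: enn_powr_ennreal powr_mono2)
qed simp

lemma enn_powr_cmult:
  assumes c: "c \<ge> 0" and a: "a > 0"
  shows "enn_powr (ennreal c * x) a = ennreal (c powr a) * enn_powr x a"
proof (cases "x = top")
  case True
  then show ?thesis
    using c by (cases "c = 0") (auto simp: enn_powr_def ennreal_mult_top)
next
  case False
  then obtain y where y: "x = ennreal y" "y \<ge> 0" by (metis ennreal_cases top.not_eq_extremum)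
  have "enn_powr (ennreal c * x) a = ennreal ((c * y) powr a)"
    using c y by (simp add: ennreal_mult[symmetric] enn_powr_ennreal)
  then show ?thesis
    using c y by (simp add: enn_powr_ennreal powr_mult ennreal_mult)
qed

lemma ennreal_comparable_chain:
  fixes A B1 B2 :: ennreal and c m :: real
  assumes B2A: "B2 \<le> A" and B12: "B1 \<le> ennreal c * B2" and AB1: "A \<le> ennreal m * B1"
    and c: "1 \<le> c" and m: "0 \<le> m"
  shows "ennreal (1 / c) * B1 \<le> A \<and> A \<le> ennreal (m * c) * B1 \<and>
         ennreal (1 / c) * B2 \<le> A \<and> A \<le> ennreal (m * c) * B2"
proof (intro conjI)
  have inv_le: "ennreal (1 / c) * B \<le> B" for B
    using c mult_right_mono[of "ennreal (1 / c)" 1 B] by (simp add: ennreal_leI[of _ 1, simplified])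
  have "ennreal (1 / c) * B1 \<le> ennreal (1 / c) * (ennreal c * B2)"
    using B12 by (rule mult_left_mono) simp
  also have "\<dots> = B2" using c by (simp add: ennreal_mult[symmetric] mult.assoc[symmetric])
  finally show "ennreal (1 / c) * B1 \<le> A" using B2A by simp
  show "ennreal (1 / c) * B2 \<le> A" using inv_le B2A order_trans by blast
  have "ennreal m * B1 \<le> ennreal (m * c) * B1"
    using c m by (intro mult_right_mono ennreal_leI) (auto simp: mult_le_cancel_left1)
  then show "A \<le> ennreal (m * c) * B1" using AB1 by simp
  have "ennreal m * B1 \<le> ennreal m * (ennreal c * B2)" using B12 by (rule mult_left_mono) simp
  then show "A \<le> ennreal (m * c) * B2"
    using AB1 m c by (simp add: ennreal_mult mult.assoc)
qed


section \<open>Trees given by parent maps\<close>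

lemma funpow_diff_compose:
  assumes "k \<le> i" "j \<le> k"
  shows "(f ^^ (k - j)) ((f ^^ (i - k)) x) = (f ^^ (i - j)) x"
proof -
  have "i - j = (k - j) + (i - k)" using assms by simp
  then show ?thesis by (simp add: funpow_add)
qed

locale parent_tree =
  fixes V :: "nat set" and par :: "nat \<Rightarrow> nat" and r :: nat
  assumes tree: "rooted_tree V par r"
begin

abbreviation dep where "dep \<equiv> depth par r"
abbreviation level where "level i \<equiv> desc V par r r i"

lemma root_in: "r \<in> V" and par_root: "par r = r"
  and par_in: "v \<in> V \<Longrightarrow> v \<noteq> r \<Longrightarrow> par v \<in> V"
  and reaches_root: "v \<in> V \<Longrightarrow> \<exists>n. (par ^^ n) v = r"
  using tree unfolding rooted_tree_def by auto

lemma funpow_depth_eq_root: "v \<in> V \<Longrightarrow> (par ^^ dep v) v = r"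
  unfolding depth_def using reaches_root by (rule LeastI_ex)

lemma depth_le: "(par ^^ n) v = r \<Longrightarrow> dep v \<le> n"
  unfolding depth_def by (rule Least_le)

lemma funpow_par_root: "(par ^^ n) r = r"
  by (induction n) (auto simp: par_root)

lemma depth_root: "dep r = 0"
  using depth_le[of 0 r] by simp

lemma funpow_ge_depth_eq_root:
  assumes "v \<in> V" "dep v \<le> n"
  shows "(par ^^ n) v = r"
proof -
  have "(par ^^ n) v = (par ^^ (n - dep v) \<circ> par ^^ dep v) v"
    using assms(2) by (simp add: funpow_add[symmetric])
  then show ?thesis using funpow_depth_eq_root[OF assms(1)] by (simp add: funpow_par_root)
qed

lemma depth_par: assumes v: "v \<in> V" "v \<noteq> r" shows "dep v = Suc (dep (par v))"
proof -
  have pv: "par v \<in> V" using par_in v by auto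
  have "dep v \<noteq> 0" using funpow_depth_eq_root[OF v(1)] v by (metis funpow_0)
  then obtain m where m: "dep v = Suc m" by (cases "dep v") auto
  have "(par ^^ m) (par v) = r"
    using funpow_depth_eq_root[OF v(1)] m funpow_Suc_right[of m par] by (metis comp_apply)
  then have "dep (par v) \<le> m" by (rule depth_le)
  moreover have "(par ^^ Suc (dep (par v))) v = r"
    using funpow_depth_eq_root[OF pv] funpow_Suc_right[of "dep (par v)" par] by (metis comp_apply)
  then have "dep v \<le> Suc (dep (par v))" by (rule depth_le)
  ultimately show ?thesis using m by simp
qed

lemma ancestor_in:
  "v \<in> V \<Longrightarrow> k \<le> dep v \<Longrightarrow> (par ^^ k) v \<in> V \<and> dep ((par ^^ k) v) = dep v - k"
proof (induction k)
  case (Suc k)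
  then have IH: "(par ^^ k) v \<in> V" "dep ((par ^^ k) v) = dep v - k" by auto
  have "(par ^^ k) v \<noteq> r"
    using depth_le[of k v] Suc.prems by auto
  then show ?case using depth_par[OF IH(1)] par_in[OF IH(1)] IH Suc.prems by simp
qed simp

lemma level_eq: "level i = {v \<in> V. dep v = i}"
  unfolding desc_def using funpow_ge_depth_eq_root depth_root by auto

lemma desc_subset_level: "desc V par r \<xi> m \<subseteq> level (dep \<xi> + m)"
  unfolding level_eq by (auto simp: desc_def)

lemma ancestor_in_level: "\<eta> \<in> level i \<Longrightarrow> k \<le> i \<Longrightarrow> (par ^^ (i - k)) \<eta> \<in> level k"
  using ancestor_in unfolding level_eq by auto

text \<open>Each vertex of level \<open>k\<close> is the ancestor of exactly \<open>card (desc \<xi> (i - k))\<close> vertices of level \<open>i\<close>.\<close>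

lemma sum_level_ancestor:
  fixes \<phi> :: "nat \<Rightarrow> 'a::comm_semiring_1"
  assumes fin: "finite (level i)" "finite (level k)" and ki: "k \<le> i"
  shows "(\<Sum>\<eta>\<in>level i. \<phi> ((par ^^ (i - k)) \<eta>))
       = (\<Sum>\<xi>\<in>level k. \<phi> \<xi> * of_nat (card (desc V par r \<xi> (i - k))))"
proof -
  let ?g = "par ^^ (i - k)"
  have "?g ` level i \<subseteq> level k" using ancestor_in_level ki by auto
  then have "(\<Sum>\<eta>\<in>level i. \<phi> (?g \<eta>)) = (\<Sum>\<xi>\<in>level k. \<Sum>\<eta>\<in>{x \<in> level i. ?g x = \<xi>}. \<phi> (?g \<eta>))"
    by (rule sum.group[OF fin, symmetric])
  also have "\<dots> = (\<Sum>\<xi>\<in>level k. \<phi> \<xi> * of_nat (card (desc V par r \<xi> (i - k))))"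
  proof (rule sum.cong[OF refl])
    fix \<xi> assume \<xi>: "\<xi> \<in> level k"
    have "{x \<in> level i. ?g x = \<xi>} = desc V par r \<xi> (i - k)"
      using \<xi> ki unfolding level_eq by (auto simp: desc_def)
    moreover have "(\<Sum>\<eta>\<in>{x \<in> level i. ?g x = \<xi>}. \<phi> (?g \<eta>)) = (\<Sum>\<eta>\<in>{x \<in> level i. ?g x = \<xi>}. \<phi> \<xi>)"
      by (rule sum.cong) auto
    ultimately show "(\<Sum>\<eta>\<in>{x \<in> level i. ?g x = \<xi>}. \<phi> (?g \<eta>)) = \<phi> \<xi> * of_nat (card (desc V par r \<xi> (i - k)))"
      by (simp add: mult.commute)
  qed
  finally show ?thesis .
qed

lemma sum_ancestors_eq:
  assumes \<xi>: "\<xi> \<in> V"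
  shows "(\<Sum>x\<in>ancestors par r \<xi>. h x) = (\<Sum>j\<le>dep \<xi>. h ((par ^^ (dep \<xi> - j)) \<xi>))"
proof -
  have inj: "inj_on (\<lambda>k. (par ^^ k) \<xi>) {..dep \<xi>}"
  proof (rule inj_onI)
    fix a b assume "a \<in> {..dep \<xi>}" "b \<in> {..dep \<xi>}" "(par ^^ a) \<xi> = (par ^^ b) \<xi>"
    then show "a = b" using ancestor_in[OF \<xi>, of a] ancestor_in[OF \<xi>, of b] by auto
  qed
  have "ancestors par r \<xi> = (\<lambda>k. (par ^^ k) \<xi>) ` {..dep \<xi>}"
    unfolding ancestors_def by auto
  then have "(\<Sum>x\<in>ancestors par r \<xi>. h x) = (\<Sum>k\<le>dep \<xi>. h ((par ^^ k) \<xi>))"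
    using sum.reindex[OF inj] by simp
  also have "\<dots> = (\<Sum>j\<le>dep \<xi>. h ((par ^^ (dep \<xi> - j)) \<xi>))"
    by (rule sum.reindex_bij_witness[where i="\<lambda>j. dep \<xi> - j" and j="\<lambda>k. dep \<xi> - k"]) auto
  finally show ?thesis .
qed

lemma finite_ancestors: "finite (ancestors par r \<xi>)"
  unfolding ancestors_def by simp

lemma subtree_subset: "subtree V par r \<xi> \<subseteq> V"
  unfolding subtree_def desc_def by auto

lemma mem_ancestors_if_subtree: "\<eta> \<in> subtree V par r \<xi> \<Longrightarrow> \<xi> \<in> ancestors par r \<eta>"
  unfolding subtree_def desc_def ancestors_def by force

end


section \<open>The Hardy sum along branches\<close>

locale hardy_exponents =
  fixes Cs R p q :: real
  assumes p_gt_1: "1 < p" and p_less_q: "p < q" and Cs_ge_1: "Cs \<ge> 1" and R_gt_1: "R > 1"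
begin

lemma q_gt_1: "q > 1" using p_gt_1 p_less_q by simp

text \<open>
  \<open>p'\<close>, \<open>q'\<close> are the conjugate exponents and \<open>\<rho> = (q - 1) p'\<close> is the exponent that Hoelder's
  inequality puts on the damped ancestor sums; \<open>\<rho> > q\<close> because \<open>p < q\<close>. The number \<open>\<epsilon>\<close> is
  chosen so that a power mean with weights \<open>(S j / S k)^\<epsilon>\<close> still leaves the decay
  \<open>(S j / S k)^(1 + \<theta>)\<close> with \<open>\<theta> > 0\<close>.
\<close>

definition "p' = p / (p - 1)"
definition "q' = q / (q - 1)"
definition "\<rho> = (q - 1) * p'"
definition "\<kappa> = q / \<rho>"
definition "\<theta> = (\<rho> / q - 1) / 2"
definition "\<epsilon> = \<theta> / (\<rho> - 1)"
definition "\<beta>0 = R powr (- \<theta>)"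
definition "\<beta>1 = R powr (- \<epsilon>)"
definition "\<beta> = \<beta>0 powr \<kappa>"
definition "C1 = (1 / (1 - \<beta>1)) powr (\<rho> - 1) * Cs"
definition "M1 = 1 / q + C1 powr \<kappa> / q' * (1 / (1 - \<beta>))"
definition "M0 = Cs * q * M1"

lemma exponent_facts:
  "p' > 1" "1/p + 1/p' = 1" "q' > 1" "1/q + 1/q' = 1"
  "\<rho> > q" "\<rho> > 1" "0 < \<kappa>" "\<kappa> \<le> 1" "\<theta> > 0" "\<epsilon> > 0"
  "\<epsilon> + (1/q - \<epsilon>) * \<rho> = 1 + \<theta>" "q' / p' = \<kappa>" "\<rho> * \<kappa> = q"
proof -
  show p': "p' > 1" "1/p + 1/p' = 1" using p_gt_1 unfolding p'_def by (simp_all add: field_simps)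
  show "q' > 1" "1/q + 1/q' = 1" using q_gt_1 unfolding q'_def by (simp_all add: field_simps)
  have "(q - 1) * p > q * (p - 1)" using p_less_q by (simp add: algebra_simps)
  then show rq: "\<rho> > q" unfolding \<rho>_def p'_def using p_gt_1 by (simp add: field_simps)
  then show r1: "\<rho> > 1" using q_gt_1 by simp
  show "0 < \<kappa>" "\<kappa> \<le> 1" "\<rho> * \<kappa> = q" unfolding \<kappa>_def using rq q_gt_1 by auto
  show th: "\<theta> > 0" unfolding \<theta>_def using rq q_gt_1 by (simp add: field_simps)
  then show "\<epsilon> > 0" unfolding \<epsilon>_def using r1 by simp
  have "\<epsilon> * (\<rho> - 1) = \<theta>" unfolding \<epsilon>_def using r1 by simp
  moreover have "\<rho> / q = 1 + 2 * \<theta>" unfolding \<theta>_def by (simp add: field_simps)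
  moreover have "\<epsilon> + (1/q - \<epsilon>) * \<rho> = \<rho> / q - \<epsilon> * (\<rho> - 1)" by (simp add: algebra_simps)
  ultimately show "\<epsilon> + (1/q - \<epsilon>) * \<rho> = 1 + \<theta>" by linarith
  show "q' / p' = \<kappa>" unfolding \<kappa>_def q'_def \<rho>_def using p_gt_1 q_gt_1 p' by (simp add: field_simps)
qed

lemma decay_facts: "0 < \<beta>0" "\<beta>0 < 1" "0 < \<beta>1" "\<beta>1 < 1" "0 < \<beta>" "\<beta> < 1" "C1 > 0"
proof -
  show b0: "0 < \<beta>0" "0 < \<beta>1" unfolding \<beta>0_def \<beta>1_def using R_gt_1 by auto
  show "\<beta>0 < 1" "\<beta>1 < 1" unfolding \<beta>0_def \<beta>1_def using R_gt_1 exponent_facts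
    by (auto intro: powr_less_one)
  then show "C1 > 0" unfolding C1_def using Cs_ge_1 by simp
  show "0 < \<beta>" "\<beta> < 1"
    unfolding \<beta>_def using b0 \<open>\<beta>0 < 1\<close> exponent_facts powr_less_mono2[of \<kappa> \<beta>0 1] by simp_all
qed

lemma M0_pos: "M0 > 0"
proof -
  have "M1 > 0" unfolding M1_def using q_gt_1 decay_facts exponent_facts by (intro add_pos_nonneg) auto
  then show ?thesis unfolding M0_def using Cs_ge_1 q_gt_1 by simp
qed

end

locale hardy_setting = parent_tree + hardy_exponents +
  fixes uj wj :: "nat \<Rightarrow> real" and S :: "nat \<Rightarrow> real"
  assumes uj_nonneg: "\<And>j. uj j \<ge> 0" and wj_nonneg: "\<And>j. wj j \<ge> 0"
    and S_pos: "\<And>j. S j > 0"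
    and card_desc_bounds: "\<And>j \<xi> j'. \<xi> \<in> level j \<Longrightarrow> j \<le> j' \<Longrightarrow>
          S j' / (Cs * S j) \<le> real (card (desc V par r \<xi> (j' - j))) \<and>
          real (card (desc V par r \<xi> (j' - j))) \<le> Cs * S j' / S j"
    and S_growth: "\<And>j. R \<le> S (Suc j) / S j"
begin

lemma card_level_pos: "card (level i) > 0"
proof -
  have "r \<in> level 0" unfolding level_eq using root_in depth_root by simp
  then have "S i / (Cs * S 0) \<le> real (card (level i))"
    using card_desc_bounds[of r 0 i] by simp
  moreover have "S i / (Cs * S 0) > 0" using S_pos Cs_ge_1 by simp
  ultimately show ?thesis by simp
qed

lemma finite_level: "finite (level i)" and level_nonempty: "level i \<noteq> {}"
  using card_level_pos[of i] card_gt_0_iff by blast+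

lemma S_ratio_le_power: "j \<le> k \<Longrightarrow> S j / S k \<le> (1/R) ^ (k - j)"
proof (induction k)
  case (Suc k)
  show ?case
  proof (cases "j = Suc k")
    case False
    then have jk: "j \<le> k" using Suc by simp
    have "S (Suc k) \<ge> R * S k" using S_growth[of k] S_pos[of k] by (simp add: le_divide_eq)
    then have "S j / S (Suc k) \<le> S j / (R * S k)"
      using S_pos R_gt_1 by (intro divide_left_mono) (auto intro: mult_pos_pos less_imp_le)
    also have "\<dots> = (1/R) * (S j / S k)" by simp
    also have "\<dots> \<le> (1/R) * (1/R) ^ (k - j)" using Suc.IH[OF jk] R_gt_1 by (intro mult_left_mono) auto
    also have "\<dots> = (1/R) ^ (Suc k - j)" using jk by (simp add: Suc_diff_le)
    finally show ?thesis .
  qed (use S_pos in simp)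
qed simp

lemma S_ratio_powr_le: "j \<le> k \<Longrightarrow> a > 0 \<Longrightarrow> (S j / S k) powr a \<le> (R powr (-a)) ^ (k - j)"
proof -
  assume jk: "j \<le> k" and a: "a > 0"
  have "(S j / S k) powr a \<le> ((1/R) ^ (k - j)) powr a"
    using S_ratio_le_power[OF jk] S_pos[of j] S_pos[of k] a by (intro powr_mono2) auto
  also have "\<dots> = ((1/R) powr a) ^ (k - j)" using R_gt_1 by (simp add: realpow_powr)
  also have "(1/R) powr a = R powr (-a)" using R_gt_1 by (simp add: powr_minus_divide powr_divide)
  finally show ?thesis .
qed


definition hardy_sum :: "(nat \<Rightarrow> real) \<Rightarrow> nat \<Rightarrow> real" where
  "hardy_sum g \<eta> = (\<Sum>j\<le>dep \<eta>. uj j * g ((par ^^ (dep \<eta> - j)) \<eta>))"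

definition hardy_increment :: "(nat \<Rightarrow> real) \<Rightarrow> nat \<Rightarrow> real" where
  "hardy_increment g \<xi> = hardy_sum g \<xi> powr q - (hardy_sum g \<xi> - uj (dep \<xi>) * g \<xi>) powr q"

definition tail_mass :: "nat \<Rightarrow> nat \<Rightarrow> real" where
  "tail_mass N k = (\<Sum>i\<in>{k..N}. wj i powr q * S i)"

definition damped_sum :: "(nat \<Rightarrow> real) \<Rightarrow> nat \<Rightarrow> real" where
  "damped_sum g \<xi> = (\<Sum>j\<le>dep \<xi>. (S j / S (dep \<xi>)) powr (1/q) * g ((par ^^ (dep \<xi> - j)) \<xi>))"

definition level_p_sum :: "(nat \<Rightarrow> real) \<Rightarrow> nat \<Rightarrow> real" where
  "level_p_sum g k = (\<Sum>\<xi>\<in>level k. g \<xi> powr p)"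

definition level_damped_sum :: "(nat \<Rightarrow> real) \<Rightarrow> nat \<Rightarrow> real" where
  "level_damped_sum g k = (\<Sum>\<xi>\<in>level k. damped_sum g \<xi> powr \<rho>)"

lemma hardy_sum_nonneg: "(\<And>x. g x \<ge> 0) \<Longrightarrow> hardy_sum g \<eta> \<ge> 0"
  unfolding hardy_sum_def using uj_nonneg by (auto intro!: sum_nonneg)

lemma damped_sum_nonneg: "(\<And>x. g x \<ge> 0) \<Longrightarrow> damped_sum g \<xi> \<ge> 0"
  unfolding damped_sum_def by (auto intro!: sum_nonneg)

lemma S_nonneg: "S i \<ge> 0"
  using S_pos[of i] by simp

lemma tail_mass_nonneg: "tail_mass N k \<ge> 0"
  unfolding tail_mass_def using S_nonneg by (intro sum_nonneg mult_nonneg_nonneg) auto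

lemma tail_mass_antimono: "j \<le> k \<Longrightarrow> tail_mass N k \<le> tail_mass N j"
  unfolding tail_mass_def using S_nonneg by (intro sum_mono2) (auto intro: mult_nonneg_nonneg)

lemma hardy_sum_powr_telescope:
  assumes \<eta>: "\<eta> \<in> level i"
  shows "hardy_sum g \<eta> powr q = (\<Sum>k\<le>i. hardy_increment g ((par ^^ (i - k)) \<eta>))"
proof -
  define a where "a j = uj j * g ((par ^^ (i - j)) \<eta>)" for j
  define Q where "Q m = (\<Sum>j<m. a j) powr q" for m
  have di: "dep \<eta> = i" using \<eta> unfolding level_eq by simp
  have increment: "hardy_increment g ((par ^^ (i - k)) \<eta>) = Q (Suc k) - Q k" if k: "k \<le> i" for k
  proof -
    let ?\<xi> = "(par ^^ (i - k)) \<eta>"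
    have dx: "dep ?\<xi> = k" using ancestor_in_level[OF \<eta> k] unfolding level_eq by simp
    have "hardy_sum g ?\<xi> = (\<Sum>j\<le>k. a j)"
      unfolding hardy_sum_def dx a_def using k by (intro sum.cong) (auto simp: funpow_diff_compose)
    moreover have "uj (dep ?\<xi>) * g ?\<xi> = a k" unfolding dx a_def by simp
    ultimately show ?thesis
      unfolding hardy_increment_def Q_def by (simp add: lessThan_Suc_atMost[symmetric])
  qed
  have "(\<Sum>k\<le>i. hardy_increment g ((par ^^ (i - k)) \<eta>)) = (\<Sum>k<Suc i. Q (Suc k) - Q k)"
    using increment by (simp add: lessThan_Suc_atMost)
  also have "\<dots> = Q (Suc i) - Q 0" by (rule sum_lessThan_telescope)
  also have "\<dots> = hardy_sum g \<eta> powr q"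
    unfolding Q_def hardy_sum_def di a_def using q_gt_1 by (simp add: lessThan_Suc_atMost)
  finally show ?thesis by simp
qed

lemma hardy_increment_bounds:
  assumes g: "\<And>x. g x \<ge> 0" and \<xi>: "\<xi> \<in> level k"
  shows "0 \<le> hardy_increment g \<xi>"
    and "hardy_increment g \<xi> \<le> q * hardy_sum g \<xi> powr (q - 1) * (uj k * g \<xi>)"
proof -
  have dx: "dep \<xi> = k" using \<xi> unfolding level_eq by simp
  have "hardy_sum g \<xi> = (\<Sum>j<k. uj j * g ((par ^^ (k - j)) \<xi>)) + uj k * g \<xi>"
    unfolding hardy_sum_def dx by (simp add: lessThan_Suc_atMost[symmetric])
  then have y0: "0 \<le> hardy_sum g \<xi> - uj k * g \<xi>" using g uj_nonneg by (auto intro!: sum_nonneg)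
  have yx: "hardy_sum g \<xi> - uj k * g \<xi> \<le> hardy_sum g \<xi>" using g uj_nonneg by simp
  show "0 \<le> hardy_increment g \<xi>"
    unfolding hardy_increment_def dx using y0 yx q_gt_1 by (auto intro!: powr_mono2)
  show "hardy_increment g \<xi> \<le> q * hardy_sum g \<xi> powr (q - 1) * (uj k * g \<xi>)"
    unfolding hardy_increment_def dx using powr_diff_le[OF y0 yx] q_gt_1 by simp
qed

lemma sum_level_hardy_sum_le:
  assumes g: "\<And>x. g x \<ge> 0"
  shows "(\<Sum>\<eta>\<in>level i. hardy_sum g \<eta> powr q)
       \<le> (\<Sum>k\<le>i. \<Sum>\<xi>\<in>level k. hardy_increment g \<xi> * (Cs * S i / S k))"
proof -
  have "(\<Sum>\<eta>\<in>level i. hardy_sum g \<eta> powr q)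
      = (\<Sum>k\<le>i. \<Sum>\<eta>\<in>level i. hardy_increment g ((par ^^ (i - k)) \<eta>))"
    by (simp add: hardy_sum_powr_telescope sum.swap[of _ "level i"])
  also have "\<dots> = (\<Sum>k\<le>i. \<Sum>\<xi>\<in>level k. hardy_increment g \<xi> * real (card (desc V par r \<xi> (i - k))))"
    by (simp add: sum_level_ancestor[OF finite_level finite_level])
  also have "\<dots> \<le> (\<Sum>k\<le>i. \<Sum>\<xi>\<in>level k. hardy_increment g \<xi> * (Cs * S i / S k))"
    using card_desc_bounds hardy_increment_bounds(1)[OF g]
    by (intro sum_mono mult_left_mono) auto
  finally show ?thesis .
qed

lemma sum_levels_hardy_sum_le:
  assumes g: "\<And>x. g x \<ge> 0"
  shows "(\<Sum>i\<le>N. \<Sum>\<eta>\<in>level i. (wj i * hardy_sum g \<eta>) powr q)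
       \<le> Cs * (\<Sum>k\<le>N. \<Sum>\<xi>\<in>level k. hardy_increment g \<xi> * tail_mass N k / S k)"
proof -
  have "(\<Sum>i\<le>N. \<Sum>\<eta>\<in>level i. (wj i * hardy_sum g \<eta>) powr q)
      = (\<Sum>i\<le>N. wj i powr q * (\<Sum>\<eta>\<in>level i. hardy_sum g \<eta> powr q))"
    using wj_nonneg hardy_sum_nonneg[OF g] by (simp add: powr_mult sum_distrib_left)
  also have "\<dots> \<le> (\<Sum>i\<le>N. wj i powr q * (\<Sum>k\<le>i. \<Sum>\<xi>\<in>level k. hardy_increment g \<xi> * (Cs * S i / S k)))"
    by (intro sum_mono mult_left_mono sum_level_hardy_sum_le[OF g]) simp
  also have "\<dots> = (\<Sum>k\<le>N. \<Sum>i\<in>{k..N}. \<Sum>\<xi>\<in>level k. wj i powr q * (hardy_increment g \<xi> * (Cs * S i / S k)))"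
    by (simp add: sum_distrib_left sum_atMost_triangle_swap)
  also have "\<dots> = (\<Sum>k\<le>N. Cs * (\<Sum>\<xi>\<in>level k. hardy_increment g \<xi> * tail_mass N k / S k))"
  proof (rule sum.cong[OF refl])
    fix k
    have "(\<Sum>i\<in>{k..N}. \<Sum>\<xi>\<in>level k. wj i powr q * (hardy_increment g \<xi> * (Cs * S i / S k)))
        = (\<Sum>\<xi>\<in>level k. \<Sum>i\<in>{k..N}. (Cs * hardy_increment g \<xi> / S k) * (wj i powr q * S i))"
      by (subst sum.swap) (simp add: mult_ac)
    also have "\<dots> = (\<Sum>\<xi>\<in>level k. (Cs * hardy_increment g \<xi> / S k) * tail_mass N k)"
      by (simp add: tail_mass_def sum_distrib_left)
    also have "\<dots> = Cs * (\<Sum>\<xi>\<in>level k. hardy_increment g \<xi> * tail_mass N k / S k)"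
      by (simp add: sum_distrib_left mult_ac)
    finally show "(\<Sum>i\<in>{k..N}. \<Sum>\<xi>\<in>level k. wj i powr q * (hardy_increment g \<xi> * (Cs * S i / S k)))
        = Cs * (\<Sum>\<xi>\<in>level k. hardy_increment g \<xi> * tail_mass N k / S k)" .
  qed
  also have "\<dots> = Cs * (\<Sum>k\<le>N. \<Sum>\<xi>\<in>level k. hardy_increment g \<xi> * tail_mass N k / S k)"
    by (simp add: sum_distrib_left)
  finally show ?thesis .
qed

text \<open>
  The hypothesis on \<open>b\<close> used from here on is the level-wise supremum condition of the theorem,
  with the tail truncated at level \<open>N\<close>.
\<close>

lemma uj_tail_mass_le:
  assumes b: "b \<ge> 0" and Hb: "\<And>j N. uj j powr q * (tail_mass N j / S j) \<le> b powr q"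
    and jk: "j \<le> k"
  shows "uj j * (tail_mass N k / S k) powr (1/q) \<le> b * (S j / S k) powr (1/q)"
proof -
  define t where "t = tail_mass N k / S k"
  have t0: "t \<ge> 0" unfolding t_def using tail_mass_nonneg S_nonneg[of k] by simp
  have "uj j powr q * t = (uj j powr q * (tail_mass N k / S j)) * (S j / S k)"
    unfolding t_def using S_pos[of j] by simp
  also have "\<dots> \<le> (uj j powr q * (tail_mass N j / S j)) * (S j / S k)"
    using tail_mass_antimono[OF jk] S_pos[of j] S_pos[of k]
    by (intro mult_right_mono mult_left_mono divide_right_mono) auto
  also have "\<dots> \<le> b powr q * (S j / S k)"
    using Hb S_pos[of j] S_pos[of k] by (intro mult_right_mono) auto
  finally have "(uj j powr q * t) powr (1/q) \<le> (b powr q * (S j / S k)) powr (1/q)"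
    using t0 q_gt_1 by (intro powr_mono2) auto
  moreover have "(uj j powr q * t) powr (1/q) = uj j * t powr (1/q)"
    using uj_nonneg[of j] q_gt_1 by (simp add: powr_mult powr_powr)
  moreover have "(b powr q * (S j / S k)) powr (1/q) = b * (S j / S k) powr (1/q)"
    using b q_gt_1 by (simp only: powr_mult powr_powr) simp
  ultimately show ?thesis unfolding t_def by simp
qed

lemma tail_mass_hardy_sum_le:
  assumes g: "\<And>x. g x \<ge> 0" and b: "b \<ge> 0"
    and Hb: "\<And>j N. uj j powr q * (tail_mass N j / S j) \<le> b powr q"
    and \<xi>: "\<xi> \<in> level k"
  shows "(tail_mass N k / S k) powr (1/q) * hardy_sum g \<xi> \<le> b * damped_sum g \<xi>"
proof -
  have dx: "dep \<xi> = k" using \<xi> unfolding level_eq by simp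
  have "(tail_mass N k / S k) powr (1/q) * hardy_sum g \<xi>
      = (\<Sum>j\<le>k. (uj j * (tail_mass N k / S k) powr (1/q)) * g ((par ^^ (k - j)) \<xi>))"
    unfolding hardy_sum_def dx by (simp add: sum_distrib_left mult_ac)
  also have "\<dots> \<le> (\<Sum>j\<le>k. (b * (S j / S k) powr (1/q)) * g ((par ^^ (k - j)) \<xi>))"
    using uj_tail_mass_le[OF b Hb] g by (intro sum_mono mult_right_mono) auto
  also have "\<dots> = b * damped_sum g \<xi>"
    unfolding damped_sum_def dx by (simp add: sum_distrib_left mult_ac)
  finally show ?thesis .
qed

lemma hardy_increment_tail_le:
  assumes g: "\<And>x. g x \<ge> 0" and b: "b \<ge> 0"
    and Hb: "\<And>j N. uj j powr q * (tail_mass N j / S j) \<le> b powr q"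
    and \<xi>: "\<xi> \<in> level k"
  shows "hardy_increment g \<xi> * (tail_mass N k / S k) \<le> q * b powr q * (g \<xi> * damped_sum g \<xi> powr (q - 1))"
proof -
  define t where "t = tail_mass N k / S k"
  have t0: "t \<ge> 0" unfolding t_def using tail_mass_nonneg S_pos[of k] by simp
  have P0: "hardy_sum g \<xi> \<ge> 0" using hardy_sum_nonneg[OF g] .
  have t_split: "t powr (1/q) * (t powr (1/q)) powr (q - 1) = t"
  proof -
    have "t powr (1/q) * (t powr (1/q)) powr (q - 1) = t powr (1/q + 1/q * (q - 1))"
      by (simp add: powr_powr powr_add)
    also have "1/q + 1/q * (q - 1) = 1" using q_gt_1 by (simp add: field_simps)
    finally show ?thesis using t0 by simp
  qed
  have "hardy_increment g \<xi> * t \<le> q * hardy_sum g \<xi> powr (q - 1) * (uj k * g \<xi>) * t"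
    using hardy_increment_bounds(2)[OF g \<xi>] t0 by (intro mult_right_mono) auto
  also have "\<dots> = q * (g \<xi> * ((uj k * t powr (1/q)) * (t powr (1/q) * hardy_sum g \<xi>) powr (q - 1)))"
    using t_split P0 t0 by (simp add: powr_mult mult_ac)
  also have "\<dots> \<le> q * (g \<xi> * (b * (b * damped_sum g \<xi>) powr (q - 1)))"
  proof -
    have "uj k * t powr (1/q) \<le> b" using uj_tail_mass_le[OF b Hb, of k k N] S_pos[of k] unfolding t_def by simp
    moreover have "(t powr (1/q) * hardy_sum g \<xi>) powr (q - 1) \<le> (b * damped_sum g \<xi>) powr (q - 1)"
      using tail_mass_hardy_sum_le[OF g b Hb \<xi>] P0 t0 q_gt_1 unfolding t_def by (intro powr_mono2) auto
    ultimately show ?thesis using b uj_nonneg[of k] g[of \<xi>] q_gt_1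
      by (intro mult_left_mono mult_mono) auto
  qed
  also have "\<dots> = q * b powr q * (g \<xi> * damped_sum g \<xi> powr (q - 1))"
  proof -
    have "b * b powr (q - 1) = b powr q" using b powr_add[of b 1 "q - 1"] by simp
    then show ?thesis using b damped_sum_nonneg[OF g] by (simp add: powr_mult mult_ac)
  qed
  finally show ?thesis unfolding t_def .
qed


lemma sum_level_ancestor_le:
  assumes \<phi>: "\<And>x. \<phi> x \<ge> 0" and jk: "j \<le> k"
  shows "(\<Sum>\<xi>\<in>level k. \<phi> ((par ^^ (k - j)) \<xi>)) \<le> (Cs * S k / S j) * (\<Sum>\<zeta>\<in>level j. \<phi> \<zeta>)"
proof -
  have "(\<Sum>\<xi>\<in>level k. \<phi> ((par ^^ (k - j)) \<xi>)) = (\<Sum>\<zeta>\<in>level j. \<phi> \<zeta> * real (card (desc V par r \<zeta> (k - j))))"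
    by (rule sum_level_ancestor[OF finite_level finite_level jk])
  also have "\<dots> \<le> (\<Sum>\<zeta>\<in>level j. \<phi> \<zeta> * (Cs * S k / S j))"
    using card_desc_bounds jk \<phi> by (intro sum_mono mult_left_mono) auto
  finally show ?thesis by (simp add: sum_distrib_left mult_ac)
qed

lemma sum_level_damped_le_Holder:
  assumes g: "\<And>x. g x \<ge> 0"
  shows "(\<Sum>\<xi>\<in>level k. g \<xi> * damped_sum g \<xi> powr (q - 1))
       \<le> level_p_sum g k powr (1/p) * level_damped_sum g k powr (1/p')"
proof -
  have "(\<Sum>\<xi>\<in>level k. g \<xi> * damped_sum g \<xi> powr (q - 1))
      \<le> level_p_sum g k powr (1/p) * (\<Sum>\<xi>\<in>level k. (damped_sum g \<xi> powr (q - 1)) powr p') powr (1/p')"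
    unfolding level_p_sum_def
    by (rule Holder_inequality_sum) (use finite_level g p_gt_1 exponent_facts in auto)
  also have "(\<Sum>\<xi>\<in>level k. (damped_sum g \<xi> powr (q - 1)) powr p') = level_damped_sum g k"
    unfolding level_damped_sum_def \<rho>_def by (simp add: powr_powr)
  finally show ?thesis .
qed

text \<open>Power mean with the weights \<open>(S j / S k)^\<epsilon>\<close>, whose sum is bounded by a geometric series.\<close>

lemma damped_sum_powr_le:
  assumes g: "\<And>x. g x \<ge> 0" and \<xi>: "\<xi> \<in> level k"
  shows "damped_sum g \<xi> powr \<rho>
       \<le> (1 / (1 - \<beta>1)) powr (\<rho> - 1) * (\<Sum>j\<le>k. (S j / S k) powr (1 + \<theta>) * g ((par ^^ (k - j)) \<xi>) powr \<rho>)"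
proof -
  have dx: "dep \<xi> = k" using \<xi> unfolding level_eq by simp
  define \<sigma> where "\<sigma> j = S j / S k" for j
  define x where "x j = g ((par ^^ (k - j)) \<xi>)" for j
  have \<sigma>p: "\<sigma> j > 0" for j unfolding \<sigma>_def using S_pos[of j] S_pos[of k] by simp
  have x0: "x j \<ge> 0" for j unfolding x_def using g by simp
  define \<alpha> where "\<alpha> j = \<sigma> j powr \<epsilon>" for j
  define y where "y j = \<sigma> j powr (1/q - \<epsilon>) * x j" for j
  have "\<alpha> j * y j = \<sigma> j powr (1/q) * x j" for j
    unfolding \<alpha>_def y_def by (simp add: mult.assoc[symmetric] powr_add[symmetric])
  then have Keq: "damped_sum g \<xi> = (\<Sum>j\<le>k. \<alpha> j * y j)"
    unfolding damped_sum_def dx \<sigma>_def x_def by simp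
  have "(\<Sum>j\<le>k. \<alpha> j) \<le> (\<Sum>j\<le>k. \<beta>1 ^ (k - j))"
    unfolding \<alpha>_def \<sigma>_def \<beta>1_def using S_ratio_powr_le exponent_facts by (intro sum_mono) auto
  also have "\<dots> \<le> 1 / (1 - \<beta>1)" by (rule sum_power_diff_le) (use decay_facts in auto)
  finally have \<alpha>_sum: "(\<Sum>j\<le>k. \<alpha> j) powr (\<rho> - 1) \<le> (1 / (1 - \<beta>1)) powr (\<rho> - 1)"
    using exponent_facts by (intro powr_mono2) (auto simp: \<alpha>_def intro: sum_nonneg)
  have "damped_sum g \<xi> powr \<rho> \<le> (\<Sum>j\<le>k. \<alpha> j) powr (\<rho> - 1) * (\<Sum>j\<le>k. \<alpha> j * y j powr \<rho>)"
    unfolding Keq by (rule powr_weighted_sum_le) (use x0 exponent_facts in \<open>auto simp: \<alpha>_def y_def\<close>)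
  also have "\<dots> \<le> (1 / (1 - \<beta>1)) powr (\<rho> - 1) * (\<Sum>j\<le>k. \<alpha> j * y j powr \<rho>)"
    using \<alpha>_sum by (rule mult_right_mono) (auto simp: \<alpha>_def intro!: sum_nonneg)
  also have "(\<Sum>j\<le>k. \<alpha> j * y j powr \<rho>) = (\<Sum>j\<le>k. (S j / S k) powr (1 + \<theta>) * g ((par ^^ (k - j)) \<xi>) powr \<rho>)"
  proof (rule sum.cong[OF refl])
    fix j
    have "\<alpha> j * y j powr \<rho> = \<sigma> j powr (\<epsilon> + (1/q - \<epsilon>) * \<rho>) * x j powr \<rho>"
      unfolding \<alpha>_def y_def using x0 \<sigma>p by (simp add: powr_mult powr_powr powr_add mult_ac)
    then show "\<alpha> j * y j powr \<rho> = (S j / S k) powr (1 + \<theta>) * g ((par ^^ (k - j)) \<xi>) powr \<rho>"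
      using exponent_facts unfolding \<sigma>_def x_def by simp
  qed
  finally show ?thesis .
qed

lemma sum_level_powr_rho_le:
  assumes g: "\<And>x. g x \<ge> 0"
  shows "(\<Sum>\<zeta>\<in>level j. g \<zeta> powr \<rho>) \<le> level_p_sum g j powr (\<rho> / p)"
proof -
  have pr: "0 < p / \<rho>" "p / \<rho> \<le> 1" using exponent_facts p_gt_1 p_less_q by auto
  have "(\<Sum>\<zeta>\<in>level j. g \<zeta> powr \<rho>) powr (p / \<rho>) \<le> (\<Sum>\<zeta>\<in>level j. (g \<zeta> powr \<rho>) powr (p / \<rho>))"
    by (rule powr_sum_le_sum_powr) (use finite_level pr in auto)
  also have "\<dots> = level_p_sum g j" unfolding level_p_sum_def using exponent_facts by (simp add: powr_powr)
  finally have le: "(\<Sum>\<zeta>\<in>level j. g \<zeta> powr \<rho>) powr (p / \<rho>) \<le> level_p_sum g j" .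
  have nn: "0 \<le> (\<Sum>\<zeta>\<in>level j. g \<zeta> powr \<rho>)" by (auto intro: sum_nonneg)
  have "(\<Sum>\<zeta>\<in>level j. g \<zeta> powr \<rho>) = ((\<Sum>\<zeta>\<in>level j. g \<zeta> powr \<rho>) powr (p / \<rho>)) powr (\<rho> / p)"
    using nn exponent_facts p_gt_1 by (simp add: powr_powr)
  also have "\<dots> \<le> level_p_sum g j powr (\<rho> / p)"
    using le exponent_facts p_gt_1 by (intro powr_mono2) auto
  finally show ?thesis .
qed

lemma level_damped_sum_le:
  assumes g: "\<And>x. g x \<ge> 0"
  shows "level_damped_sum g k \<le> C1 * (\<Sum>j\<le>k. \<beta>0 ^ (k - j) * level_p_sum g j powr (\<rho> / p))"
proof -
  let ?A = "(1 / (1 - \<beta>1)) powr (\<rho> - 1)"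
  have "level_damped_sum g k
      \<le> (\<Sum>\<xi>\<in>level k. ?A * (\<Sum>j\<le>k. (S j / S k) powr (1 + \<theta>) * g ((par ^^ (k - j)) \<xi>) powr \<rho>))"
    unfolding level_damped_sum_def by (rule sum_mono) (rule damped_sum_powr_le[OF g])
  also have "\<dots> = ?A * (\<Sum>j\<le>k. (S j / S k) powr (1 + \<theta>) * (\<Sum>\<xi>\<in>level k. g ((par ^^ (k - j)) \<xi>) powr \<rho>))"
    by (simp add: sum_distrib_left sum.swap[of _ "level k"])
  also have "\<dots> \<le> ?A * (\<Sum>j\<le>k. Cs * (\<beta>0 ^ (k - j) * level_p_sum g j powr (\<rho> / p)))"
  proof (intro mult_left_mono sum_mono)
    fix j assume "j \<in> {..k}"
    then have jk: "j \<le> k" by simp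
    have "(S j / S k) powr (1 + \<theta>) * (\<Sum>\<xi>\<in>level k. g ((par ^^ (k - j)) \<xi>) powr \<rho>)
        \<le> (S j / S k) powr (1 + \<theta>) * ((Cs * S k / S j) * (\<Sum>\<zeta>\<in>level j. g \<zeta> powr \<rho>))"
      using sum_level_ancestor_le[of "\<lambda>x. g x powr \<rho>", OF _ jk] by (intro mult_left_mono) auto
    also have "\<dots> = Cs * ((S j / S k) powr \<theta> * (\<Sum>\<zeta>\<in>level j. g \<zeta> powr \<rho>))"
      using S_pos[of j] S_pos[of k] by (simp add: powr_add)
    also have "\<dots> \<le> Cs * (\<beta>0 ^ (k - j) * level_p_sum g j powr (\<rho> / p))"
      using S_ratio_powr_le[OF jk, of \<theta>] sum_level_powr_rho_le[OF g] Cs_ge_1 exponent_facts decay_facts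
      unfolding \<beta>0_def by (intro mult_left_mono mult_mono) (auto intro: sum_nonneg)
    finally show "(S j / S k) powr (1 + \<theta>) * (\<Sum>\<xi>\<in>level k. g ((par ^^ (k - j)) \<xi>) powr \<rho>)
        \<le> Cs * (\<beta>0 ^ (k - j) * level_p_sum g j powr (\<rho> / p))" .
  qed simp
  also have "\<dots> = C1 * (\<Sum>j\<le>k. \<beta>0 ^ (k - j) * level_p_sum g j powr (\<rho> / p))"
    unfolding C1_def by (simp add: sum_distrib_left mult_ac)
  finally show ?thesis .
qed

lemma sum_level_damped_le:
  assumes g: "\<And>x. g x \<ge> 0"
  shows "(\<Sum>\<xi>\<in>level k. g \<xi> * damped_sum g \<xi> powr (q - 1))
       \<le> level_p_sum g k powr (q / p) / q
         + C1 powr \<kappa> / q' * (\<Sum>j\<le>k. \<beta> ^ (k - j) * level_p_sum g j powr (q / p))"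
proof -
  have "(\<Sum>\<xi>\<in>level k. g \<xi> * damped_sum g \<xi> powr (q - 1))
      \<le> level_p_sum g k powr (1/p) * level_damped_sum g k powr (1/p')"
    by (rule sum_level_damped_le_Holder[OF g])
  also have "\<dots> \<le> (level_p_sum g k powr (1/p)) powr q / q + (level_damped_sum g k powr (1/p')) powr q' / q'"
    by (rule Youngs_inequality) (use q_gt_1 exponent_facts in auto)
  also have "(level_p_sum g k powr (1/p)) powr q = level_p_sum g k powr (q / p)" by (simp add: powr_powr)
  also have "(level_damped_sum g k powr (1/p')) powr q' = level_damped_sum g k powr \<kappa>"
    using exponent_facts by (simp add: powr_powr)
  also have "level_damped_sum g k powr \<kappa> \<le> C1 powr \<kappa> * (\<Sum>j\<le>k. \<beta> ^ (k - j) * level_p_sum g j powr (q / p))"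
  proof -
    have "level_damped_sum g k powr \<kappa> \<le> (C1 * (\<Sum>j\<le>k. \<beta>0 ^ (k - j) * level_p_sum g j powr (\<rho> / p))) powr \<kappa>"
      using level_damped_sum_le[OF g] exponent_facts
      by (intro powr_mono2) (auto simp: level_damped_sum_def intro: sum_nonneg)
    also have "\<dots> = C1 powr \<kappa> * (\<Sum>j\<le>k. \<beta>0 ^ (k - j) * level_p_sum g j powr (\<rho> / p)) powr \<kappa>"
      by (simp add: powr_mult)
    also have "\<dots> \<le> C1 powr \<kappa> * (\<Sum>j\<le>k. (\<beta>0 ^ (k - j) * level_p_sum g j powr (\<rho> / p)) powr \<kappa>)"
      using decay_facts exponent_facts by (intro mult_left_mono powr_sum_le_sum_powr) auto
    also have "(\<Sum>j\<le>k. (\<beta>0 ^ (k - j) * level_p_sum g j powr (\<rho> / p)) powr \<kappa>)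
             = (\<Sum>j\<le>k. \<beta> ^ (k - j) * level_p_sum g j powr (q / p))"
    proof (rule sum.cong[OF refl])
      fix j
      show "(\<beta>0 ^ (k - j) * level_p_sum g j powr (\<rho> / p)) powr \<kappa> = \<beta> ^ (k - j) * level_p_sum g j powr (q / p)"
        unfolding \<beta>_def using decay_facts by (simp add: powr_mult realpow_powr powr_powr exponent_facts(13))
    qed
    finally show ?thesis .
  qed
  finally show ?thesis using exponent_facts by (simp add: divide_right_mono)
qed

lemma sum_levels_damped_le:
  assumes g: "\<And>x. g x \<ge> 0"
  shows "(\<Sum>k\<le>N. \<Sum>\<xi>\<in>level k. g \<xi> * damped_sum g \<xi> powr (q - 1)) \<le> M1 * (\<Sum>k\<le>N. level_p_sum g k powr (q / p))"
proof -
  let ?G = "\<lambda>k. level_p_sum g k powr (q / p)"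
  have "(\<Sum>k\<le>N. \<Sum>\<xi>\<in>level k. g \<xi> * damped_sum g \<xi> powr (q - 1))
      \<le> (\<Sum>k\<le>N. ?G k / q + C1 powr \<kappa> / q' * (\<Sum>j\<le>k. \<beta> ^ (k - j) * ?G j))"
    by (rule sum_mono) (rule sum_level_damped_le[OF g])
  also have "\<dots> = (\<Sum>k\<le>N. ?G k) / q + C1 powr \<kappa> / q' * (\<Sum>k\<le>N. \<Sum>j\<le>k. \<beta> ^ (k - j) * ?G j)"
    by (simp add: sum.distrib sum_divide_distrib sum_distrib_left)
  also have "\<dots> \<le> (\<Sum>k\<le>N. ?G k) / q + C1 powr \<kappa> / q' * (1 / (1 - \<beta>) * (\<Sum>j\<le>N. ?G j))"
    using decay_facts exponent_facts by (intro add_left_mono mult_left_mono sum_geometric_convolution_le) auto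
  also have "\<dots> = M1 * (\<Sum>k\<le>N. ?G k)"
    unfolding M1_def by (simp add: algebra_simps)
  finally show ?thesis .
qed

lemma sum_levels_hardy_le:
  assumes g: "\<And>x. g x \<ge> 0" and b: "b \<ge> 0"
    and Hb: "\<And>j N. uj j powr q * (tail_mass N j / S j) \<le> b powr q"
  shows "(\<Sum>i\<le>N. \<Sum>\<eta>\<in>level i. (wj i * hardy_sum g \<eta>) powr q)
       \<le> M0 * b powr q * (\<Sum>k\<le>N. level_p_sum g k powr (q / p))"
proof -
  have "(\<Sum>i\<le>N. \<Sum>\<eta>\<in>level i. (wj i * hardy_sum g \<eta>) powr q)
      \<le> Cs * (\<Sum>k\<le>N. \<Sum>\<xi>\<in>level k. hardy_increment g \<xi> * tail_mass N k / S k)"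
    by (rule sum_levels_hardy_sum_le[OF g])
  also have "\<dots> \<le> Cs * (\<Sum>k\<le>N. \<Sum>\<xi>\<in>level k. q * b powr q * (g \<xi> * damped_sum g \<xi> powr (q - 1)))"
    using hardy_increment_tail_le[OF g b Hb] Cs_ge_1
    by (intro mult_left_mono sum_mono) (auto simp: mult.assoc)
  also have "\<dots> = Cs * q * b powr q * (\<Sum>k\<le>N. \<Sum>\<xi>\<in>level k. g \<xi> * damped_sum g \<xi> powr (q - 1))"
    by (simp add: sum_distrib_left mult_ac)
  also have "\<dots> \<le> Cs * q * b powr q * (M1 * (\<Sum>k\<le>N. level_p_sum g k powr (q / p)))"
    using sum_levels_damped_le[OF g] Cs_ge_1 q_gt_1 by (intro mult_left_mono) auto
  also have "\<dots> = M0 * b powr q * (\<Sum>k\<le>N. level_p_sum g k powr (q / p))"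
    unfolding M0_def by (simp add: mult_ac)
  finally show ?thesis .
qed


lemma mixed_norm_eq_level_sums:
  "mixed_norm V par r p q f
     = enn_powr (\<Sum>\<^sub>\<infinity>j\<in>(UNIV::nat set). ennreal (level_p_sum (\<lambda>x. \<bar>f x\<bar>) j powr (q / p))) (1 / q)"
proof -
  have "enn_powr (\<Sum>\<^sub>\<infinity>\<xi>\<in>level j. ennreal (\<bar>f \<xi>\<bar> powr p)) (q / p)
      = ennreal (level_p_sum (\<lambda>x. \<bar>f x\<bar>) j powr (q / p))" for j
    using finite_level by (simp add: level_p_sum_def enn_powr_ennreal sum_nonneg)
  then show ?thesis unfolding mixed_norm_def by simp
qed

end

section \<open>The operator norm\<close>

locale hardy_operator = hardy_setting +
  fixes u w :: "nat \<Rightarrow> real"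
  assumes uw_levels: "\<And>\<xi>. \<xi> \<in> V \<Longrightarrow> u \<xi> = uj (dep \<xi>) \<and> w \<xi> = wj (dep \<xi>)"
begin

abbreviation level_weight :: "nat \<Rightarrow> ennreal" where
  "level_weight j \<equiv> ennreal (uj j) * enn_powr (\<Sum>\<^sub>\<infinity>i\<in>{j..}. ennreal (wj i powr q * S i / S j)) (1 / q)"

abbreviation subtree_weight :: "nat \<Rightarrow> ennreal" where
  "subtree_weight \<xi> \<equiv> ennreal (u \<xi>) * lq_norm (subtree V par r \<xi>) q w"

abbreviation level_sup :: ennreal where
  "level_sup \<equiv> SUP j. level_weight j"

abbreviation subtree_sup :: ennreal where
  "subtree_sup \<equiv> SUP \<xi>\<in>V. subtree_weight \<xi>"

lemma tail_mass_le_of_level_weight: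
  assumes b: "b \<ge> 0"
    and bound: "level_weight j \<le> ennreal b"
  shows "uj j powr q * (tail_mass N j / S j) \<le> b powr q"
proof (cases "uj j = 0")
  case False
  then have ujp: "uj j > 0" using uj_nonneg[of j] by simp
  define X where "X = (\<Sum>\<^sub>\<infinity>i\<in>{j..}. ennreal (wj i powr q * S i / S j))"
  have "X \<noteq> top"
  proof
    assume "X = top"
    then have "ennreal (uj j) * enn_powr X (1 / q) = top" using ujp by simp
    then show False using bound unfolding X_def by (simp add: top_unique)
  qed
  then obtain x where x: "X = ennreal x" "x \<ge> 0" by (metis ennreal_cases top.not_eq_extremum)
  have "ennreal (tail_mass N j / S j) = (\<Sum>i\<in>{j..N}. ennreal (wj i powr q * S i / S j))"
    unfolding tail_mass_def using S_nonneg by (simp add: sum_divide_distrib sum_nonneg)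
  also have "\<dots> \<le> X" unfolding X_def by (rule sum_le_infsum_ennreal) auto
  finally have "tail_mass N j / S j \<le> x" using x tail_mass_nonneg S_nonneg[of j] by simp
  then have Tx: "uj j powr q * (tail_mass N j / S j) \<le> uj j powr q * x" by (intro mult_left_mono) auto
  have "ennreal (uj j * x powr (1/q)) \<le> ennreal b"
    using bound x uj_nonneg[of j] unfolding X_def[symmetric] by (simp add: enn_powr_ennreal ennreal_mult)
  then have "uj j * x powr (1/q) \<le> b" using b by simp
  then have "(uj j * x powr (1/q)) powr q \<le> b powr q"
    using uj_nonneg[of j] q_gt_1 by (intro powr_mono2) auto
  then have "uj j powr q * x \<le> b powr q"
    using x q_gt_1 by (simp add: powr_mult powr_powr)
  then show ?thesis using Tx by simp
qed simp

lemma hardy_op_eq: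
  assumes \<eta>: "\<eta> \<in> level i"
  shows "hardy_op par r u w f \<eta> = wj i * hardy_sum f \<eta>"
proof -
  have eV: "\<eta> \<in> V" and di: "dep \<eta> = i" using \<eta> unfolding level_eq by auto
  have "(\<Sum>x\<in>ancestors par r \<eta>. u x * f x) = (\<Sum>j\<le>i. u ((par ^^ (i - j)) \<eta>) * f ((par ^^ (i - j)) \<eta>))"
    using sum_ancestors_eq[OF eV] di by simp
  also have "\<dots> = hardy_sum f \<eta>"
    unfolding hardy_sum_def di
  proof (rule sum.cong[OF refl])
    fix j assume "j \<in> {..i}"
    then have "(par ^^ (i - j)) \<eta> \<in> V" "dep ((par ^^ (i - j)) \<eta>) = j"
      using ancestor_in[OF eV, of "i - j"] di by auto
    then show "u ((par ^^ (i - j)) \<eta>) * f ((par ^^ (i - j)) \<eta>) = uj j * f ((par ^^ (i - j)) \<eta>)"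
      using uw_levels by simp
  qed
  finally show ?thesis unfolding hardy_op_def using uw_levels[OF eV] di by simp
qed

lemma abs_hardy_op_le:
  assumes \<eta>: "\<eta> \<in> level i"
  shows "\<bar>hardy_op par r u w f \<eta>\<bar> \<le> wj i * hardy_sum (\<lambda>x. \<bar>f x\<bar>) \<eta>"
proof -
  have "\<bar>hardy_sum f \<eta>\<bar> \<le> (\<Sum>j\<le>dep \<eta>. \<bar>uj j * f ((par ^^ (dep \<eta> - j)) \<eta>)\<bar>)"
    unfolding hardy_sum_def by (rule sum_abs)
  also have "\<dots> = hardy_sum (\<lambda>x. \<bar>f x\<bar>) \<eta>"
    unfolding hardy_sum_def using uj_nonneg by (simp add: abs_mult)
  finally have "\<bar>hardy_sum f \<eta>\<bar> \<le> hardy_sum (\<lambda>x. \<bar>f x\<bar>) \<eta>" .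
  then show ?thesis
    unfolding hardy_op_eq[OF \<eta>] using wj_nonneg[of i] by (simp add: abs_mult mult_left_mono)
qed

lemma sum_hardy_op_powr_le:
  assumes b: "b \<ge> 0" and Hb: "\<And>j N. uj j powr q * (tail_mass N j / S j) \<le> b powr q"
    and F: "finite F" "F \<subseteq> V" "\<And>\<eta>. \<eta> \<in> F \<Longrightarrow> dep \<eta> \<le> N"
  shows "(\<Sum>\<eta>\<in>F. \<bar>hardy_op par r u w f \<eta>\<bar> powr q)
       \<le> M0 * b powr q * (\<Sum>k\<le>N. level_p_sum (\<lambda>x. \<bar>f x\<bar>) k powr (q / p))"
proof -
  let ?h = "\<lambda>\<eta>. \<bar>hardy_op par r u w f \<eta>\<bar> powr q"
  have "(\<Sum>\<eta>\<in>F. ?h \<eta>) = (\<Sum>i\<le>N. \<Sum>\<eta>\<in>{x \<in> F. dep x = i}. ?h \<eta>)"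
    by (rule sum.group[symmetric]) (use F in auto)
  also have "\<dots> \<le> (\<Sum>i\<le>N. \<Sum>\<eta>\<in>level i. ?h \<eta>)"
  proof (rule sum_mono)
    fix i
    show "(\<Sum>\<eta>\<in>{x \<in> F. dep x = i}. ?h \<eta>) \<le> (\<Sum>\<eta>\<in>level i. ?h \<eta>)"
      by (rule sum_mono2[OF finite_level]) (use F in \<open>auto simp: level_eq\<close>)
  qed
  also have "\<dots> \<le> (\<Sum>i\<le>N. \<Sum>\<eta>\<in>level i. (wj i * hardy_sum (\<lambda>x. \<bar>f x\<bar>) \<eta>) powr q)"
  proof (intro sum_mono)
    fix i \<eta> assume "\<eta> \<in> level i"
    then show "?h \<eta> \<le> (wj i * hardy_sum (\<lambda>x. \<bar>f x\<bar>) \<eta>) powr q"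
      using abs_hardy_op_le[of \<eta> i f] q_gt_1 by (intro powr_mono2) auto
  qed
  also have "\<dots> \<le> M0 * b powr q * (\<Sum>k\<le>N. level_p_sum (\<lambda>x. \<bar>f x\<bar>) k powr (q / p))"
    by (rule sum_levels_hardy_le[OF _ b Hb]) simp
  finally show ?thesis .
qed

lemma lq_norm_hardy_op_le:
  assumes b: "b \<ge> 0" and Hb: "\<And>j N. uj j powr q * (tail_mass N j / S j) \<le> b powr q"
    and fin: "mixed_norm V par r p q f < top"
  shows "lq_norm V q (hardy_op par r u w f) \<le> ennreal (M0 powr (1/q) * b) * mixed_norm V par r p q f"
proof -
  let ?G = "\<lambda>k. level_p_sum (\<lambda>x. \<bar>f x\<bar>) k powr (q / p)"
  let ?h = "\<lambda>\<eta>. \<bar>hardy_op par r u w f \<eta>\<bar> powr q"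
  define X where "X = (\<Sum>\<^sub>\<infinity>j\<in>(UNIV::nat set). ennreal (?G j))"
  have mx: "mixed_norm V par r p q f = enn_powr X (1 / q)"
    unfolding X_def by (rule mixed_norm_eq_level_sums)
  then have "X \<noteq> top" using fin by auto
  then obtain x where x: "X = ennreal x" "x \<ge> 0" by (metis ennreal_cases top.not_eq_extremum)
  have "(\<Sum>\<^sub>\<infinity>\<eta>\<in>V. ennreal (?h \<eta>)) \<le> ennreal (M0 * b powr q * x)"
  proof (rule infsum_le_finite_sums)
    show "(\<lambda>\<eta>. ennreal (?h \<eta>)) summable_on V" by (rule nonneg_summable_on_complete) simp
    fix F assume F: "finite F" "F \<subseteq> V"
    define N where "N = Max (insert 0 (dep ` F))"
    have "dep \<eta> \<le> N" if "\<eta> \<in> F" for \<eta> unfolding N_def using F that by (intro Max_ge) auto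
    then have "(\<Sum>\<eta>\<in>F. ?h \<eta>) \<le> M0 * b powr q * (\<Sum>k\<le>N. ?G k)"
      using sum_hardy_op_powr_le[OF b Hb F] by blast
    also have "\<dots> \<le> M0 * b powr q * x"
    proof -
      have "ennreal (\<Sum>k\<le>N. ?G k) = (\<Sum>k\<le>N. ennreal (?G k))" by (simp add: sum_nonneg)
      also have "\<dots> \<le> X" unfolding X_def by (rule sum_le_infsum_ennreal) auto
      finally have "ennreal (\<Sum>k\<le>N. ?G k) \<le> X" .
      then show ?thesis using x M0_pos b by (intro mult_left_mono) auto
    qed
    finally show "(\<Sum>\<eta>\<in>F. ennreal (?h \<eta>)) \<le> ennreal (M0 * b powr q * x)"
      by (simp add: sum_nonneg ennreal_leI)
  qed
  then have "lq_norm V q (hardy_op par r u w f) \<le> enn_powr (ennreal (M0 * b powr q * x)) (1 / q)"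
    unfolding lq_norm_def using q_gt_1 by (intro enn_powr_mono) auto
  also have "\<dots> = ennreal ((M0 powr (1/q) * b) * x powr (1 / q))"
    using M0_pos x b q_gt_1 by (simp add: enn_powr_ennreal powr_mult powr_powr)
  also have "\<dots> = ennreal (M0 powr (1/q) * b) * mixed_norm V par r p q f"
    unfolding mx x using x b by (simp add: enn_powr_ennreal ennreal_mult)
  finally show ?thesis .
qed

lemma op_norm_le_level_sup: "op_norm V par r p q u w \<le> ennreal (M0 powr (1/q)) * level_sup"
proof (cases "level_sup = top")
  case True
  have "ennreal (M0 powr (1/q)) \<noteq> 0" using M0_pos by simp
  then have "ennreal (M0 powr (1/q)) * level_sup = top" by (subst True) (rule ennreal_top_mult_left)
  then show ?thesis by simp
next
  case False
  then obtain b where b: "level_sup = ennreal b" "b \<ge> 0" by (cases level_sup rule: ennreal_cases) auto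
  have Hb: "uj j powr q * (tail_mass N j / S j) \<le> b powr q" for j N
  proof (rule tail_mass_le_of_level_weight[OF b(2)])
    show "level_weight j \<le> ennreal b" unfolding b(1)[symmetric] by (rule SUP_upper) simp
  qed
  have "op_norm V par r p q u w \<le> ennreal (M0 powr (1/q) * b)"
    unfolding op_norm_def by (rule Inf_lower) (use lq_norm_hardy_op_le[OF b(2) Hb] in auto)
  then show ?thesis using b by (simp add: ennreal_mult)
qed

lemma mixed_norm_indicator:
  assumes \<xi>: "\<xi> \<in> V"
  shows "mixed_norm V par r p q (indicator {\<xi>}) = 1"
proof -
  have abs_ind: "(\<lambda>x. \<bar>indicator {\<xi>} x :: real\<bar>) = indicator {\<xi>}" by (auto simp: fun_eq_iff)
  have G: "level_p_sum (indicator {\<xi>}) j = (if j = dep \<xi> then 1 else 0)" for j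
  proof -
    have "level_p_sum (indicator {\<xi>}) j = (\<Sum>x\<in>level j. if x = \<xi> then 1 else 0)"
      unfolding level_p_sum_def by (intro sum.cong) auto
    also have "\<dots> = (if \<xi> \<in> level j then 1 else 0)" using finite_level by simp
    also have "\<dots> = (if j = dep \<xi> then 1 else 0)" using \<xi> unfolding level_eq by auto
    finally show ?thesis .
  qed
  have "(\<Sum>\<^sub>\<infinity>j\<in>(UNIV::nat set). ennreal (level_p_sum (indicator {\<xi>}) j powr (q / p)))
      = (\<Sum>\<^sub>\<infinity>j\<in>{dep \<xi>}. ennreal (level_p_sum (indicator {\<xi>}) j powr (q / p)))"
    by (rule infsum_cong_neutral) (auto simp: G)
  also have "\<dots> = 1" by (simp add: G)
  finally show ?thesis
    unfolding mixed_norm_eq_level_sums abs_ind by (simp add: enn_powr_ennreal[of 1, simplified])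
qed

lemma hardy_op_indicator:
  assumes \<eta>: "\<eta> \<in> subtree V par r \<xi>"
  shows "hardy_op par r u w (indicator {\<xi>}) \<eta> = w \<eta> * u \<xi>"
proof -
  have "(\<Sum>x\<in>ancestors par r \<eta>. u x * indicator {\<xi>} x) = (\<Sum>x\<in>ancestors par r \<eta>. if x = \<xi> then u \<xi> else 0)"
    by (intro sum.cong) auto
  also have "\<dots> = u \<xi>" using mem_ancestors_if_subtree[OF \<eta>] finite_ancestors by simp
  finally show ?thesis unfolding hardy_op_def by simp
qed

lemma subtree_weight_le_lq_norm_indicator:
  assumes \<xi>: "\<xi> \<in> V"
  shows "subtree_weight \<xi> \<le> lq_norm V q (hardy_op par r u w (indicator {\<xi>}))"
proof -
  define Z where "Z = (\<Sum>\<^sub>\<infinity>\<eta>\<in>subtree V par r \<xi>. ennreal (\<bar>w \<eta>\<bar> powr q))"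
  have u0: "u \<xi> \<ge> 0" using uw_levels[OF \<xi>] uj_nonneg by simp
  have "ennreal (u \<xi> powr q) * Z = (\<Sum>\<^sub>\<infinity>\<eta>\<in>subtree V par r \<xi>. ennreal (u \<xi> powr q) * ennreal (\<bar>w \<eta>\<bar> powr q))"
    unfolding Z_def by (rule infsum_cmult_ennreal[symmetric])
  also have "\<dots> = (\<Sum>\<^sub>\<infinity>\<eta>\<in>subtree V par r \<xi>. ennreal (\<bar>hardy_op par r u w (indicator {\<xi>}) \<eta>\<bar> powr q))"
  proof (rule infsum_cong)
    fix \<eta> assume \<eta>: "\<eta> \<in> subtree V par r \<xi>"
    show "ennreal (u \<xi> powr q) * ennreal (\<bar>w \<eta>\<bar> powr q)
        = ennreal (\<bar>hardy_op par r u w (indicator {\<xi>}) \<eta>\<bar> powr q)"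
      using u0 by (simp add: hardy_op_indicator[OF \<eta>] abs_mult powr_mult ennreal_mult[symmetric] mult.commute)
  qed
  also have "\<dots> \<le> (\<Sum>\<^sub>\<infinity>\<eta>\<in>V. ennreal (\<bar>hardy_op par r u w (indicator {\<xi>}) \<eta>\<bar> powr q))"
    by (rule infsum_mono_set_ennreal[OF subtree_subset])
  finally have ZZ: "ennreal (u \<xi> powr q) * Z
      \<le> (\<Sum>\<^sub>\<infinity>\<eta>\<in>V. ennreal (\<bar>hardy_op par r u w (indicator {\<xi>}) \<eta>\<bar> powr q))" .
  have "subtree_weight \<xi> = enn_powr (ennreal (u \<xi> powr q) * Z) (1 / q)"
    unfolding lq_norm_def Z_def using u0 q_gt_1 by (simp add: enn_powr_cmult powr_powr)
  also have "\<dots> \<le> lq_norm V q (hardy_op par r u w (indicator {\<xi>}))"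
    unfolding lq_norm_def using ZZ q_gt_1 by (intro enn_powr_mono) auto
  finally show ?thesis .
qed

lemma subtree_weight_le_op_norm:
  assumes \<xi>: "\<xi> \<in> V"
  shows "subtree_weight \<xi> \<le> op_norm V par r p q u w"
  unfolding op_norm_def
proof (rule Inf_greatest)
  fix C assume "C \<in> {C. \<forall>f. mixed_norm V par r p q f < top \<longrightarrow>
       lq_norm V q (hardy_op par r u w f) \<le> C * mixed_norm V par r p q f}"
  then have "mixed_norm V par r p q (indicator {\<xi>}) < top \<longrightarrow>
      lq_norm V q (hardy_op par r u w (indicator {\<xi>})) \<le> C * mixed_norm V par r p q (indicator {\<xi>})"
    by blast
  then have "lq_norm V q (hardy_op par r u w (indicator {\<xi>})) \<le> C"
    using mixed_norm_indicator[OF \<xi>] by simp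
  then show "subtree_weight \<xi> \<le> C"
    using subtree_weight_le_lq_norm_indicator[OF \<xi>] by (rule order_trans[rotated])
qed


lemma subtree_sup_le_op_norm: "subtree_sup \<le> op_norm V par r p q u w"
  using subtree_weight_le_op_norm by (rule SUP_least)

lemma sum_desc_weights_le_subtree:
  assumes \<xi>: "\<xi> \<in> level j"
  shows "ennreal (\<Sum>i\<in>{j..N}. wj i powr q * real (card (desc V par r \<xi> (i - j))))
       \<le> (\<Sum>\<^sub>\<infinity>\<eta>\<in>subtree V par r \<xi>. ennreal (\<bar>w \<eta>\<bar> powr q))"
proof -
  have dx: "dep \<xi> = j" using \<xi> unfolding level_eq by simp
  have fin_desc: "finite (desc V par r \<xi> m)" for m
    using desc_subset_level finite_level finite_subset by blast
  have depU: "dep \<eta> = i \<and> \<eta> \<in> V" if "\<eta> \<in> desc V par r \<xi> (i - j)" "j \<le> i" for \<eta> i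
    using that unfolding desc_def dx by auto
  define U where "U = (\<Union>i\<in>{j..N}. desc V par r \<xi> (i - j))"
  have disj: "\<forall>i\<in>{j..N}. \<forall>i'\<in>{j..N}. i \<noteq> i' \<longrightarrow> desc V par r \<xi> (i - j) \<inter> desc V par r \<xi> (i' - j) = {}"
  proof (intro ballI impI equals0I)
    fix i i' \<eta> assume "i \<in> {j..N}" "i' \<in> {j..N}" "i \<noteq> i'"
      and "\<eta> \<in> desc V par r \<xi> (i - j) \<inter> desc V par r \<xi> (i' - j)"
    then show False using depU[of \<eta> i] depU[of \<eta> i'] by auto
  qed
  have "(\<Sum>i\<in>{j..N}. wj i powr q * real (card (desc V par r \<xi> (i - j))))
      = (\<Sum>i\<in>{j..N}. \<Sum>\<eta>\<in>desc V par r \<xi> (i - j). \<bar>w \<eta>\<bar> powr q)"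
  proof (rule sum.cong[OF refl])
    fix i assume "i \<in> {j..N}"
    then have "(\<Sum>\<eta>\<in>desc V par r \<xi> (i - j). \<bar>w \<eta>\<bar> powr q) = (\<Sum>\<eta>\<in>desc V par r \<xi> (i - j). wj i powr q)"
      using depU uw_levels wj_nonneg by (intro sum.cong) auto
    then show "wj i powr q * real (card (desc V par r \<xi> (i - j)))
        = (\<Sum>\<eta>\<in>desc V par r \<xi> (i - j). \<bar>w \<eta>\<bar> powr q)"
      by (simp add: mult.commute)
  qed
  also have "\<dots> = (\<Sum>\<eta>\<in>U. \<bar>w \<eta>\<bar> powr q)"
    unfolding U_def using disj fin_desc by (intro sum.UNION_disjoint[symmetric]) auto
  finally have "ennreal (\<Sum>i\<in>{j..N}. wj i powr q * real (card (desc V par r \<xi> (i - j))))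
      = (\<Sum>\<eta>\<in>U. ennreal (\<bar>w \<eta>\<bar> powr q))" by simp
  also have "\<dots> \<le> (\<Sum>\<^sub>\<infinity>\<eta>\<in>subtree V par r \<xi>. ennreal (\<bar>w \<eta>\<bar> powr q))"
    by (rule sum_le_infsum_ennreal) (auto simp: U_def subtree_def fin_desc)
  finally show ?thesis .
qed

lemma level_tail_le_subtree_sum:
  assumes \<xi>: "\<xi> \<in> level j"
  shows "(\<Sum>\<^sub>\<infinity>i\<in>{j..}. ennreal (wj i powr q * S i / S j))
       \<le> ennreal Cs * (\<Sum>\<^sub>\<infinity>\<eta>\<in>subtree V par r \<xi>. ennreal (\<bar>w \<eta>\<bar> powr q))"
proof (rule infsum_le_finite_sums)
  show "(\<lambda>i. ennreal (wj i powr q * S i / S j)) summable_on {j..}"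
    by (rule nonneg_summable_on_complete) simp
  let ?card = "\<lambda>i. real (card (desc V par r \<xi> (i - j)))"
  fix F assume F: "finite F" "F \<subseteq> {j..}"
  define N where "N = Max (insert j F)"
  have "F \<subseteq> {j..N}" unfolding N_def using F by (auto intro: Max_ge)
  then have "(\<Sum>i\<in>F. ennreal (wj i powr q * S i / S j)) \<le> (\<Sum>i\<in>{j..N}. ennreal (wj i powr q * S i / S j))"
    by (intro sum_mono2) auto
  also have "\<dots> = ennreal (\<Sum>i\<in>{j..N}. wj i powr q * S i / S j)"
    using S_nonneg by (simp add: sum_nonneg)
  also have "\<dots> \<le> ennreal (Cs * (\<Sum>i\<in>{j..N}. wj i powr q * ?card i))"
    unfolding sum_distrib_left
  proof (intro ennreal_leI sum_mono)
    fix i assume "i \<in> {j..N}"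
    then have "S i / (Cs * S j) \<le> ?card i" using card_desc_bounds[OF \<xi>] by simp
    then have "S i / S j \<le> Cs * ?card i" using Cs_ge_1 S_pos[of j] by (simp add: divide_le_eq field_simps)
    then have "wj i powr q * (S i / S j) \<le> wj i powr q * (Cs * ?card i)" by (intro mult_left_mono) auto
    then show "wj i powr q * S i / S j \<le> Cs * (wj i powr q * ?card i)" by (simp add: mult_ac)
  qed
  also have "\<dots> = ennreal Cs * ennreal (\<Sum>i\<in>{j..N}. wj i powr q * ?card i)"
    using Cs_ge_1 by (intro ennreal_mult) (auto intro: sum_nonneg)
  also have "\<dots> \<le> ennreal Cs * (\<Sum>\<^sub>\<infinity>\<eta>\<in>subtree V par r \<xi>. ennreal (\<bar>w \<eta>\<bar> powr q))"
    using sum_desc_weights_le_subtree[OF \<xi>] by (rule mult_left_mono) simp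
  finally show "(\<Sum>i\<in>F. ennreal (wj i powr q * S i / S j))
      \<le> ennreal Cs * (\<Sum>\<^sub>\<infinity>\<eta>\<in>subtree V par r \<xi>. ennreal (\<bar>w \<eta>\<bar> powr q))" .
qed

lemma level_weight_le_subtree_weight:
  assumes \<xi>: "\<xi> \<in> level j"
  shows "level_weight j \<le> ennreal Cs * subtree_weight \<xi>"
proof -
  have \<xi>V: "\<xi> \<in> V" and dx: "dep \<xi> = j" using \<xi> unfolding level_eq by auto
  define Z where "Z = (\<Sum>\<^sub>\<infinity>\<eta>\<in>subtree V par r \<xi>. ennreal (\<bar>w \<eta>\<bar> powr q))"
  have "level_weight j \<le> ennreal (uj j) * enn_powr (ennreal Cs * Z) (1 / q)"
    using level_tail_le_subtree_sum[OF \<xi>] q_gt_1 unfolding Z_def by (intro mult_left_mono enn_powr_mono) auto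
  also have "\<dots> = ennreal (Cs powr (1/q)) * subtree_weight \<xi>"
    using Cs_ge_1 q_gt_1 uw_levels[OF \<xi>V] dx unfolding lq_norm_def Z_def
    by (simp add: enn_powr_cmult mult_ac)
  also have "\<dots> \<le> ennreal Cs * subtree_weight \<xi>"
    using powr_mono[of "1/q" 1 Cs] Cs_ge_1 q_gt_1 by (intro mult_right_mono ennreal_leI) auto
  finally show ?thesis .
qed

lemma level_sup_le_subtree_sup: "level_sup \<le> ennreal Cs * subtree_sup"
proof (rule SUP_least)
  fix j
  obtain \<xi> where \<xi>: "\<xi> \<in> level j" using level_nonempty[of j] by blast
  then have "subtree_weight \<xi> \<le> subtree_sup" unfolding level_eq by (intro SUP_upper) auto
  then have "ennreal Cs * subtree_weight \<xi> \<le> ennreal Cs * subtree_sup" by (rule mult_left_mono) simp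
  with level_weight_le_subtree_weight[OF \<xi>] show "level_weight j \<le> ennreal Cs * subtree_sup"
    by (rule order_trans)
qed

end

theorem theorem2:
  fixes p q Cs R R0 :: real
  assumes "1 < p" "p < q" "Cs \<ge> 1" "R > 1" "R0 \<ge> R"
  shows "\<exists>c1 c2 :: real. c1 > 0 \<and> c2 > 0 \<and>
    (\<forall>(V :: nat set) par r (u :: nat \<Rightarrow> real) (w :: nat \<Rightarrow> real) uj wj (S :: nat \<Rightarrow> real).
      rooted_tree V par r \<longrightarrow>
      (\<forall>j. uj j \<ge> 0 \<and> wj j \<ge> 0) \<longrightarrow>
      (\<forall>\<xi>\<in>V. u \<xi> = uj (depth par r \<xi>) \<and> w \<xi> = wj (depth par r \<xi>)) \<longrightarrow>
      (\<forall>j. S j > 0) \<longrightarrow>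
      (\<forall>j. \<forall>\<xi>\<in>desc V par r r j. \<forall>j'\<ge>j.
          S j' / (Cs * S j) \<le> real (card (desc V par r \<xi> (j' - j))) \<and>
          real (card (desc V par r \<xi> (j' - j))) \<le> Cs * S j' / S j) \<longrightarrow>
      S 0 = 1 \<longrightarrow>
      (\<forall>j. S (Suc j) / S j \<le> R0 \<and> R \<le> S (Suc j) / S j) \<longrightarrow>
      (let A = op_norm V par r p q u w;
           B1 = (SUP j. ennreal (uj j) *
                   enn_powr (\<Sum>\<^sub>\<infinity>i\<in>{j..}. ennreal (wj i powr q * S i / S j)) (1 / q));
           B2 = (SUP \<xi>\<in>V. ennreal (u \<xi>) * lq_norm (subtree V par r \<xi>) q w)
       in ennreal c1 * B1 \<le> A \<and> A \<le> ennreal c2 * B1 \<and>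
          ennreal c1 * B2 \<le> A \<and> A \<le> ennreal c2 * B2))"
proof -
  interpret hardy_exponents Cs R p q using assms by unfold_locales auto
  show ?thesis
  proof (rule exI[of _ "1 / Cs"], rule exI[of _ "M0 powr (1/q) * Cs"], intro conjI allI impI)
    fix V par r and u w uj wj S :: "nat \<Rightarrow> real"
    assume "rooted_tree V par r" "\<forall>j. uj j \<ge> 0 \<and> wj j \<ge> 0"
      "\<forall>\<xi>\<in>V. u \<xi> = uj (depth par r \<xi>) \<and> w \<xi> = wj (depth par r \<xi>)" "\<forall>j. S j > 0"
      "\<forall>j. \<forall>\<xi>\<in>desc V par r r j. \<forall>j'\<ge>j.
          S j' / (Cs * S j) \<le> real (card (desc V par r \<xi> (j' - j))) \<and>
          real (card (desc V par r \<xi> (j' - j))) \<le> Cs * S j' / S j"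
      "S 0 = 1" "\<forall>j. S (Suc j) / S j \<le> R0 \<and> R \<le> S (Suc j) / S j"
    then interpret hardy_operator V par r Cs R p q uj wj S u w
      using assms by unfold_locales auto
    show "let A = op_norm V par r p q u w; B1 = level_sup; B2 = subtree_sup
      in ennreal (1 / Cs) * B1 \<le> A \<and> A \<le> ennreal (M0 powr (1/q) * Cs) * B1 \<and>
         ennreal (1 / Cs) * B2 \<le> A \<and> A \<le> ennreal (M0 powr (1/q) * Cs) * B2"
      unfolding Let_def
      by (rule ennreal_comparable_chain[OF subtree_sup_le_op_norm level_sup_le_subtree_sup
            op_norm_le_level_sup Cs_ge_1]) simp
  qed (use Cs_ge_1 M0_pos in auto)
qed

end
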